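(* Let $A\cup\{\varphi\}$ be a finite set of formulas of $\mathcal{L}$. If $A\vdash_{\mathsf{IntCK}}\varphi$, then the nested sequent $A^\bullet,\varphi^\circ$ (where $A^\bullet=\{\gamma^\bullet\mid\gamma\in A\}$) is derivable in $\mathsf{N.IntCK}$.
   Context: Language $\mathcal{L}$: formulas $\varphi ::= p \mid \bot \mid \varphi\wedge\varphi \mid \varphi\vee\varphi \mid \varphi\to\varphi \mid \varphi \mathrel{\Box\!\!\to} \varphi \mid \varphi \mathrel{\Diamond\!\!\to}\varphi$; $\neg\varphi:=\varphi\to\bot$, $\top:=\neg\bot$, $\varphi\leftrightarrow\psi:=(\varphi\to\psi)\wedge(\psi\to\varphi)$. Hilbert system $\mathsf{IntCK}$: any axiomatisation of intuitionistic propositional logic in $\mathcal{L}$ with modus ponens, plus rules RA$_\Box$: from $\varphi\leftrightarrow\rho$ infer $(\varphi\mathrel{\Box\!\!\to}\psi)\leftrightarrow(\rho\mathrel{\Box\!\!\to}\psi)$; RC$_\Box$: from $\psi\leftrightarrow\chi$ infer $(\varphi\mathrel{\Box\!\!\to}\psi)\leftrightarrow(\varphi\mathrel{\Box\!\!\to}\chi)$; RA$_\Diamond$, RC$_\Diamond$: the same with $\mathrel{\Diamond\!\!\to}$; axioms CM$_\Box$: $(\varphi\mathrel{\Box\!\!\to}\psi\wedge\chi)\to(\varphi\mathrel{\Box\!\!\to}\psi)\wedge(\varphi\mathrel{\Box\!\!\to}\chi)$; CC$_\Box$: $(\varphi\mathrel{\Box\!\!\to}\psi)\wedge(\varphi\mathrel{\Box\!\!\to}\chi)\to(\varphi\mathrel{\Box\!\!\to}\psi\wedge\chi)$;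 CN$_\Box$: $\varphi\mathrel{\Box\!\!\to}\top$; CM$_\Diamond$: $(\varphi\mathrel{\Diamond\!\!\to}\psi)\vee(\varphi\mathrel{\Diamond\!\!\to}\chi)\to(\varphi\mathrel{\Diamond\!\!\to}\psi\vee\chi)$; CC$_\Diamond$: $(\varphi\mathrel{\Diamond\!\!\to}\psi\vee\chi)\to(\varphi\mathrel{\Diamond\!\!\to}\psi)\vee(\varphi\mathrel{\Diamond\!\!\to}\chi)$; CN$_\Diamond$: $\neg(\varphi\mathrel{\Diamond\!\!\to}\bot)$; CW: $(\varphi\mathrel{\Diamond\!\!\to}\psi)\wedge(\varphi\mathrel{\Box\!\!\to}\chi)\to(\varphi\mathrel{\Diamond\!\!\to}\psi\wedge\chi)$; CFS: $((\varphi\mathrel{\Diamond\!\!\to}\psi)\to(\varphi\mathrel{\Box\!\!\to}\chi))\to(\varphi\mathrel{\Box\!\!\to}(\psi\to\chi))$. $A\vdash_{\mathsf{IntCK}}\varphi$ means there are $\psi_1,\dots,\psi_n\in A$ with $\psi_1\wedge\dots\wedge\psi_n\to\varphi$ derivable in $\mathsf{IntCK}$. Nested sequents: each formula $\varphi$ gets an input polarity $\varphi^\bullet$ or output polarity $\varphi^\circ$. Input sequents $\Lambda ::= \emptyset \mid \Lambda,\varphi^\bullet \mid \Lambda,[\psi:\Lambda]$ and nested sequents $\Gamma ::= \Lambda,\varphi^\circ \mid \Lambda,[\psi:\Gamma]$, where the index $\psi$ of a component $[\psi:\cdot]$ is an unpolarised formula (commas associative and commutative). A context $\Gamma\{\ \}$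 is a sequent with one hole $\{\ \}$ (possibly inside nested components); rules are applied only when premisses and conclusion are nested sequents. $\Gamma^{\downarrow}\{\ \}$ denotes $\Gamma\{\ \}$ with its output formula removed. Rules of $\mathsf{N.IntCK}$ (premisses / conclusion): init: $\Gamma\{p^\bullet,p^\circ\}$ ($p$ atom, no premiss); $\bot^\bullet$: $\Gamma\{\bot^\bullet\}$ (no premiss); $\wedge^\bullet$: $\Gamma\{\varphi^\bullet,\psi^\bullet\}$ / $\Gamma\{(\varphi\wedge\psi)^\bullet\}$; $\wedge^\circ$: $\Gamma\{\varphi^\circ\}$, $\Gamma\{\psi^\circ\}$ / $\Gamma\{(\varphi\wedge\psi)^\circ\}$; $\vee^\bullet$: $\Gamma\{\varphi^\bullet\}$, $\Gamma\{\psi^\bullet\}$ / $\Gamma\{(\varphi\vee\psi)^\bullet\}$; $\vee^\circ$: $\Gamma\{\varphi^\circ\}$ / $\Gamma\{(\varphi\vee\psi)^\circ\}$ and $\Gamma\{\psi^\circ\}$ / $\Gamma\{(\varphi\vee\psi)^\circ\}$; $\to^\bullet$: $\Gamma^\downarrow\{(\varphi\to\psi)^\bullet,\varphi^\circ\}$, $\Gamma\{\psi^\bullet\}$ / $\Gamma\{(\varphi\to\psi)^\bullet\}$; $\to^\circ$: $\Gamma\{\varphi^\bullet,\psi^\circ\}$ / $\Gamma\{(\varphi\to\psi)^\circ\}$; $\Box^\bullet$: $\varphi^\bullet,\eta^\circ$ and $\eta^\bullet,\varphi^\circ$ and $\Gamma\{(\varphi\mathrel{\Box\!\!\to}\psi)^\bullet,[\eta:\psi^\bullet,\Delta]\}$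 / $\Gamma\{(\varphi\mathrel{\Box\!\!\to}\psi)^\bullet,[\eta:\Delta]\}$; $\Box^\circ$: $\Gamma\{[\varphi:\psi^\circ]\}$ / $\Gamma\{(\varphi\mathrel{\Box\!\!\to}\psi)^\circ\}$; $\Diamond^\bullet$: $\Gamma\{[\varphi:\psi^\bullet]\}$ / $\Gamma\{(\varphi\mathrel{\Diamond\!\!\to}\psi)^\bullet\}$; $\Diamond^\circ$: $\varphi^\bullet,\eta^\circ$ and $\eta^\bullet,\varphi^\circ$ and $\Gamma\{[\eta:\psi^\circ,\Delta]\}$ / $\Gamma\{(\varphi\mathrel{\Diamond\!\!\to}\psi)^\circ,[\eta:\Delta]\}$. A derivation is a finite tree of rule instances whose leaves are instances of init or $\bot^\bullet$. *)

theory Defs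
  imports "HOL-Library.Multiset"
begin

datatype 'a fm =
    Atom 'a
  | Bot
  | And "'a fm" "'a fm"
  | Or "'a fm" "'a fm"
  | Imp "'a fm" "'a fm"
  | BoxArr "'a fm" "'a fm"
  | DiaArr "'a fm" "'a fm"

definition Neg :: "'a fm \<Rightarrow> 'a fm" where "Neg p = Imp p Bot"
definition Top :: "'a fm" where "Top = Neg Bot"
definition Iff :: "'a fm \<Rightarrow> 'a fm \<Rightarrow> 'a fm" where "Iff p q = And (Imp p q) (Imp q p)"

inductive hprov :: "'a fm \<Rightarrow> bool" where
  K:   "hprov (Imp p (Imp q p))"
| S:   "hprov (Imp (Imp p (Imp q r)) (Imp (Imp p q) (Imp p r)))"
| AndE1: "hprov (Imp (And p q) p)"
| AndE2: "hprov (Imp (And p q) q)"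
| AndI: "hprov (Imp p (Imp q (And p q)))"
| OrI1: "hprov (Imp p (Or p q))"
| OrI2: "hprov (Imp q (Or p q))"
| OrE:  "hprov (Imp (Imp p r) (Imp (Imp q r) (Imp (Or p q) r)))"
| BotE: "hprov (Imp Bot p)"
| MP:   "hprov (Imp p q) \<Longrightarrow> hprov p \<Longrightarrow> hprov q"
| RA_Box: "hprov (Iff p r) \<Longrightarrow> hprov (Iff (BoxArr p q) (BoxArr r q))"
| RC_Box: "hprov (Iff q c) \<Longrightarrow> hprov (Iff (BoxArr p q) (BoxArr p c))"
| RA_Dia: "hprov (Iff p r) \<Longrightarrow> hprov (Iff (DiaArr p q) (DiaArr r q))"
| RC_Dia: "hprov (Iff q c) \<Longrightarrow> hprov (Iff (DiaArr p q) (DiaArr p c))"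
| CM_Box: "hprov (Imp (BoxArr p (And q c)) (And (BoxArr p q) (BoxArr p c)))"
| CC_Box: "hprov (Imp (And (BoxArr p q) (BoxArr p c)) (BoxArr p (And q c)))"
| CN_Box: "hprov (BoxArr p Top)"
| CM_Dia: "hprov (Imp (Or (DiaArr p q) (DiaArr p c)) (DiaArr p (Or q c)))"
| CC_Dia: "hprov (Imp (DiaArr p (Or q c)) (Or (DiaArr p q) (DiaArr p c)))"
| CN_Dia: "hprov (Neg (DiaArr p Bot))"
| CW: "hprov (Imp (And (DiaArr p q) (BoxArr p c)) (DiaArr p (And q c)))"
| CFS: "hprov (Imp (Imp (DiaArr p q) (BoxArr p c)) (BoxArr p (Imp q c)))"

fun conjs :: "'a fm list \<Rightarrow> 'a fm" where
  "conjs [] = Top"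
| "conjs [x] = x"
| "conjs (x # xs) = And x (conjs xs)"

definition derives :: "'a fm set \<Rightarrow> 'a fm \<Rightarrow> bool" where
  "derives A p \<longleftrightarrow> (\<exists>xs. set xs \<subseteq> A \<and> hprov (Imp (conjs xs) p))"

text \<open>A (possibly ill-formed) sequent: multiset of input formulas, multiset of
output formulas, multiset of components [index : sequent].  Commas are
associative and commutative, so multisets are used.\<close>

datatype 'a seq = Seq "'a fm multiset" "'a fm multiset" "('a fm \<times> 'a seq) multiset"

primrec outs :: "'a seq \<Rightarrow> nat" where
  "outs (Seq X Y Z) = size Y + sum_mset (image_mset snd (image_mset (map_prod id outs) Z))"

text \<open>Nested sequents are exactly those with exactly one output formula
occurring somewhere in the tree (input sequents have none).\<close>
definition nested :: "'a seq \<Rightarrow> bool" where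
  "nested S \<longleftrightarrow> outs S = 1"

primrec strip :: "'a seq \<Rightarrow> 'a seq" where
  "strip (Seq X Y Z) = Seq X {#} (image_mset (map_prod id strip) Z)"

text \<open>The material sitting next to the hole at its level
is part of the filling (see the rules below, which always add arbitrary X Y Z).\<close>
datatype 'a ctx = CHole | CNode "'a fm multiset" "'a fm multiset" "('a fm \<times> 'a seq) multiset" "'a fm" "'a ctx"

primrec fill :: "'a ctx \<Rightarrow> 'a seq \<Rightarrow> 'a seq" where
  "fill CHole D = D"
| "fill (CNode X Y Z x c) D = Seq X Y (Z + {#(x, fill c D)#})"

primrec cstrip :: "'a ctx \<Rightarrow> 'a ctx" where
  "cstrip CHole = CHole"
| "cstrip (CNode X Y Z x c) = CNode X {#} (image_mset (map_prod id strip) Z) x (cstrip c)"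

definition io :: "'a fm \<Rightarrow> 'a fm \<Rightarrow> 'a seq" where
  "io a b = Seq {#a#} {#b#} {#}"

inductive nderiv :: "'a seq \<Rightarrow> bool" where
  init: "nested (fill G (Seq (X + {#Atom p#}) (Y + {#Atom p#}) Z))
     \<Longrightarrow> nderiv (fill G (Seq (X + {#Atom p#}) (Y + {#Atom p#}) Z))"
| botL: "nested (fill G (Seq (X + {#Bot#}) Y Z))
     \<Longrightarrow> nderiv (fill G (Seq (X + {#Bot#}) Y Z))"
| andL: "nested (fill G (Seq (X + {#And a b#}) Y Z))
     \<Longrightarrow> nested (fill G (Seq (X + {#a, b#}) Y Z))
     \<Longrightarrow> nderiv (fill G (Seq (X + {#a, b#}) Y Z))
     \<Longrightarrow> nderiv (fill G (Seq (X + {#And a b#}) Y Z))"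
| andR: "nested (fill G (Seq X (Y + {#And a b#}) Z))
     \<Longrightarrow> nested (fill G (Seq X (Y + {#a#}) Z))
     \<Longrightarrow> nested (fill G (Seq X (Y + {#b#}) Z))
     \<Longrightarrow> nderiv (fill G (Seq X (Y + {#a#}) Z))
     \<Longrightarrow> nderiv (fill G (Seq X (Y + {#b#}) Z))
     \<Longrightarrow> nderiv (fill G (Seq X (Y + {#And a b#}) Z))"
| orL: "nested (fill G (Seq (X + {#Or a b#}) Y Z))
     \<Longrightarrow> nested (fill G (Seq (X + {#a#}) Y Z))
     \<Longrightarrow> nested (fill G (Seq (X + {#b#}) Y Z))
     \<Longrightarrow> nderiv (fill G (Seq (X + {#a#}) Y Z))
     \<Longrightarrow> nderiv (fill G (Seq (X + {#b#}) Y Z))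
     \<Longrightarrow> nderiv (fill G (Seq (X + {#Or a b#}) Y Z))"
| orR1: "nested (fill G (Seq X (Y + {#Or a b#}) Z))
     \<Longrightarrow> nested (fill G (Seq X (Y + {#a#}) Z))
     \<Longrightarrow> nderiv (fill G (Seq X (Y + {#a#}) Z))
     \<Longrightarrow> nderiv (fill G (Seq X (Y + {#Or a b#}) Z))"
| orR2: "nested (fill G (Seq X (Y + {#Or a b#}) Z))
     \<Longrightarrow> nested (fill G (Seq X (Y + {#b#}) Z))
     \<Longrightarrow> nderiv (fill G (Seq X (Y + {#b#}) Z))
     \<Longrightarrow> nderiv (fill G (Seq X (Y + {#Or a b#}) Z))"
| impL: "nested (fill G (Seq (X + {#Imp a b#}) Y Z))
     \<Longrightarrow> nested (fill (cstrip G) (Seq (X + {#Imp a b#}) {#a#} (image_mset (map_prod id strip) Z)))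
     \<Longrightarrow> nested (fill G (Seq (X + {#b#}) Y Z))
     \<Longrightarrow> nderiv (fill (cstrip G) (Seq (X + {#Imp a b#}) {#a#} (image_mset (map_prod id strip) Z)))
     \<Longrightarrow> nderiv (fill G (Seq (X + {#b#}) Y Z))
     \<Longrightarrow> nderiv (fill G (Seq (X + {#Imp a b#}) Y Z))"
| impR: "nested (fill G (Seq X (Y + {#Imp a b#}) Z))
     \<Longrightarrow> nested (fill G (Seq (X + {#a#}) (Y + {#b#}) Z))
     \<Longrightarrow> nderiv (fill G (Seq (X + {#a#}) (Y + {#b#}) Z))
     \<Longrightarrow> nderiv (fill G (Seq X (Y + {#Imp a b#}) Z))"
| boxL: "nested (fill G (Seq (X + {#BoxArr a b#}) Y (Z + {#(e, Seq X' Y' Z')#})))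
     \<Longrightarrow> nested (fill G (Seq (X + {#BoxArr a b#}) Y (Z + {#(e, Seq (X' + {#b#}) Y' Z')#})))
     \<Longrightarrow> nderiv (io a e) \<Longrightarrow> nderiv (io e a)
     \<Longrightarrow> nderiv (fill G (Seq (X + {#BoxArr a b#}) Y (Z + {#(e, Seq (X' + {#b#}) Y' Z')#})))
     \<Longrightarrow> nderiv (fill G (Seq (X + {#BoxArr a b#}) Y (Z + {#(e, Seq X' Y' Z')#})))"
| boxR: "nested (fill G (Seq X (Y + {#BoxArr a b#}) Z))
     \<Longrightarrow> nested (fill G (Seq X Y (Z + {#(a, Seq {#} {#b#} {#})#})))
     \<Longrightarrow> nderiv (fill G (Seq X Y (Z + {#(a, Seq {#} {#b#} {#})#})))
     \<Longrightarrow> nderiv (fill G (Seq X (Y + {#BoxArr a b#}) Z))"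
| diaL: "nested (fill G (Seq (X + {#DiaArr a b#}) Y Z))
     \<Longrightarrow> nested (fill G (Seq X Y (Z + {#(a, Seq {#b#} {#} {#})#})))
     \<Longrightarrow> nderiv (fill G (Seq X Y (Z + {#(a, Seq {#b#} {#} {#})#})))
     \<Longrightarrow> nderiv (fill G (Seq (X + {#DiaArr a b#}) Y Z))"
| diaR: "nested (fill G (Seq X (Y + {#DiaArr a b#}) (Z + {#(e, Seq X' Y' Z')#})))
     \<Longrightarrow> nested (fill G (Seq X Y (Z + {#(e, Seq X' (Y' + {#b#}) Z')#})))
     \<Longrightarrow> nderiv (io a e) \<Longrightarrow> nderiv (io e a)
     \<Longrightarrow> nderiv (fill G (Seq X Y (Z + {#(e, Seq X' (Y' + {#b#}) Z')#})))
     \<Longrightarrow> nderiv (fill G (Seq X (Y + {#DiaArr a b#}) (Z + {#(e, Seq X' Y' Z')#})))"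

end

theory Submission
  imports Defs
begin

text \<open>The proof goes through a labelled sequent calculus. A nested sequent is a tree; giving its
  nodes distinct labels, the formulas of a node \<open>x\<close> become labelled formulas \<open>x : \<phi>\<close>, and a
  component \<open>[\<psi> : \<Delta>]\<close> of \<open>x\<close> whose root is labelled \<open>y\<close> becomes an edge \<open>(x, \<psi>, y)\<close>. In the
  labelled calculus the structural properties are routine: weakening, renaming of labels,
  invertibility of the left rules, and admissibility of cut, by induction on the cut formula and
  then on the derivation of the left premiss. Cut yields modus ponens, invertibility of
  implication yields the congruence rules, and the axioms have short derivations, so every
  theorem of \<open>IntCK\<close> is derivable. Finally, a labelled derivation of the encoding of a nested
  sequent is read back rule by rule as an \<open>N.IntCK\<close> derivation, since each labelled rule acts
  at a single label, that is, inside a single context of the tree.\<close>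

section \<open>A labelled sequent calculus\<close>

type_synonym 'a edges = "(nat \<times> 'a fm \<times> nat) multiset"
type_synonym 'a lforms = "(nat \<times> 'a fm) multiset"

abbreviation labelled :: "nat \<Rightarrow> 'a fm multiset \<Rightarrow> 'a lforms" where
  "labelled x X \<equiv> image_mset (Pair x) X"

definition elabels :: "'a edges \<Rightarrow> nat set" where
  "elabels E = fst ` set_mset E \<union> (snd \<circ> snd) ` set_mset E"

definition flabels :: "'a lforms \<Rightarrow> nat set" where
  "flabels I = fst ` set_mset I"

definition labels :: "'a edges \<Rightarrow> 'a lforms \<Rightarrow> nat \<times> 'a fm \<Rightarrow> nat set" where
  "labels E I u = elabels E \<union> flabels I \<union> {fst u}"

lemma finite_elabels[simp]: "finite (elabels E)"
  by (simp add: elabels_def)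

lemma finite_flabels[simp]: "finite (flabels I)"
  by (simp add: flabels_def)

lemma finite_labels[simp]: "finite (labels E I u)"
  by (simp add: labels_def)

lemma elabels_add[simp]: "elabels (add_mset (x,e,y) E) = insert x (insert y (elabels E))"
  by (auto simp: elabels_def)

lemma elabels_empty[simp]: "elabels {#} = {}"
  by (simp add: elabels_def)

lemma elabels_union[simp]: "elabels (E + E') = elabels E \<union> elabels E'"
  by (auto simp: elabels_def)

lemma flabels_add[simp]: "flabels (add_mset (x,f) I) = insert x (flabels I)"
  by (auto simp: flabels_def)

lemma flabels_empty[simp]: "flabels {#} = {}"
  by (simp add: flabels_def)

lemma flabels_union[simp]: "flabels (I + I') = flabels I \<union> flabels I'"
  by (auto simp: flabels_def)

lemma elabels_mem: "(x,e,y) \<in># E \<Longrightarrow> x \<in> elabels E \<and> y \<in> elabels E"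
  by (force simp: elabels_def)

lemma ex_fresh_label: "finite (S::nat set) \<Longrightarrow> \<exists>y. y \<notin> S"
  by (rule ex_new_if_finite[OF infinite_UNIV_nat])

text \<open>The side premisses of \<open>BoxL\<close> and \<open>DiaR\<close> are the sequents \<open>\<phi>\<^sup>\<bullet>, \<eta>\<^sup>\<circ>\<close> of
  \<open>N.IntCK\<close>, placed at label \<open>0\<close>. The fresh label of \<open>BoxR\<close> and \<open>DiaL\<close> is quantified
  cofinitely, which makes weakening and renaming straightforward.\<close>

inductive lderiv :: "'a edges \<Rightarrow> 'a lforms \<Rightarrow> nat \<times> 'a fm \<Rightarrow> bool" where
  Init: "lderiv E (add_mset (x, Atom p) I) (x, Atom p)"
| BotL: "lderiv E (add_mset (x, Bot) I) u"
| AndL: "lderiv E (add_mset (x,a) (add_mset (x,b) I)) u \<Longrightarrow> lderiv E (add_mset (x, And a b) I) u"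
| AndR: "lderiv E I (x,a) \<Longrightarrow> lderiv E I (x,b) \<Longrightarrow> lderiv E I (x, And a b)"
| OrL: "lderiv E (add_mset (x,a) I) u \<Longrightarrow> lderiv E (add_mset (x,b) I) u
    \<Longrightarrow> lderiv E (add_mset (x, Or a b) I) u"
| OrR1: "lderiv E I (x,a) \<Longrightarrow> lderiv E I (x, Or a b)"
| OrR2: "lderiv E I (x,b) \<Longrightarrow> lderiv E I (x, Or a b)"
| ImpL: "lderiv E (add_mset (x, Imp a b) I) (x,a) \<Longrightarrow> lderiv E (add_mset (x,b) I) u
    \<Longrightarrow> lderiv E (add_mset (x, Imp a b) I) u"
| ImpR: "lderiv E (add_mset (x,a) I) (x,b) \<Longrightarrow> lderiv E I (x, Imp a b)"
| BoxL: "(x,e,z) \<in># E \<Longrightarrow> lderiv {#} {#(0,a)#} (0,e) \<Longrightarrow> lderiv {#} {#(0,e)#} (0,a)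
    \<Longrightarrow> lderiv E (add_mset (z,b) (add_mset (x, BoxArr a b) I)) u
    \<Longrightarrow> lderiv E (add_mset (x, BoxArr a b) I) u"
| BoxR: "finite F \<Longrightarrow> (\<forall>y. y \<notin> F \<longrightarrow> lderiv (add_mset (x,a,y) E) I (y,b))
    \<Longrightarrow> lderiv E I (x, BoxArr a b)"
| DiaL: "finite F \<Longrightarrow> (\<forall>y. y \<notin> F \<longrightarrow> lderiv (add_mset (x,a,y) E) (add_mset (y,b) I) u)
    \<Longrightarrow> lderiv E (add_mset (x, DiaArr a b) I) u"
| DiaR: "(x,e,z) \<in># E \<Longrightarrow> lderiv {#} {#(0,a)#} (0,e) \<Longrightarrow> lderiv {#} {#(0,e)#} (0,a)
    \<Longrightarrow> lderiv E I (z,b) \<Longrightarrow> lderiv E I (x, DiaArr a b)"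

abbreviation lentails :: "'a fm \<Rightarrow> 'a fm \<Rightarrow> bool" where
  "lentails a b \<equiv> lderiv {#} {#(0,a)#} (0,b)"

section \<open>Structural properties\<close>

lemma lderiv_weaken: "lderiv E I u \<Longrightarrow> lderiv (E + E') (I + I') u"
proof (induction arbitrary: E' I' rule: lderiv.induct)
  case (BoxR F x a E I b)
  then show ?case by (intro lderiv.BoxR[of F]) auto
next
  case (DiaL F x a E b I u)
  then show ?case by (auto intro!: lderiv.DiaL[of F])
qed (auto intro: lderiv.intros)

lemma lderiv_weaken1: "lderiv E I u \<Longrightarrow> lderiv E (add_mset v I) u"
  using lderiv_weaken[of E I u "{#}" "{#v#}"] by simp

lemma lderiv_weaken_edge1: "lderiv E I u \<Longrightarrow> lderiv (add_mset v E) I u"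
  using lderiv_weaken[of E I u "{#v#}" "{#}"] by simp

definition rename_edges :: "(nat \<Rightarrow> nat) \<Rightarrow> 'a edges \<Rightarrow> 'a edges" where
  "rename_edges \<sigma> E = image_mset (\<lambda>(x,e,y). (\<sigma> x, e, \<sigma> y)) E"

definition rename_forms :: "(nat \<Rightarrow> nat) \<Rightarrow> 'a lforms \<Rightarrow> 'a lforms" where
  "rename_forms \<sigma> I = image_mset (\<lambda>(x,f). (\<sigma> x, f)) I"

lemma rename_edges_add[simp]:
  "rename_edges \<sigma> (add_mset (x,e,y) E) = add_mset (\<sigma> x, e, \<sigma> y) (rename_edges \<sigma> E)"
  by (simp add: rename_edges_def)

lemma rename_forms_add[simp]:
  "rename_forms \<sigma> (add_mset (x,f) I) = add_mset (\<sigma> x, f) (rename_forms \<sigma> I)"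
  by (simp add: rename_forms_def)

lemma rename_edges_empty[simp]: "rename_edges \<sigma> {#} = {#}"
  by (simp add: rename_edges_def)

lemma rename_forms_empty[simp]: "rename_forms \<sigma> {#} = {#}"
  by (simp add: rename_forms_def)

lemma rename_edges_mem: "(x,e,z) \<in># E \<Longrightarrow> (\<sigma> x, e, \<sigma> z) \<in># rename_edges \<sigma> E"
  by (force simp: rename_edges_def)

lemma rename_edges_cong:
  "(\<And>z. z \<in> elabels E \<Longrightarrow> \<sigma> z = \<tau> z) \<Longrightarrow> rename_edges \<sigma> E = rename_edges \<tau> E"
  unfolding rename_edges_def elabels_def by (rule image_mset_cong) force

lemma rename_forms_cong:
  "(\<And>z. z \<in> flabels I \<Longrightarrow> \<sigma> z = \<tau> z) \<Longrightarrow> rename_forms \<sigma> I = rename_forms \<tau> I"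
  unfolding rename_forms_def flabels_def by (rule image_mset_cong) force

lemma rename_edges_id: "(\<And>z. z \<in> elabels E \<Longrightarrow> \<sigma> z = z) \<Longrightarrow> rename_edges \<sigma> E = E"
  unfolding rename_edges_def elabels_def by (rule trans[OF image_mset_cong image_mset_id]) force

lemma rename_forms_id: "(\<And>z. z \<in> flabels I \<Longrightarrow> \<sigma> z = z) \<Longrightarrow> rename_forms \<sigma> I = I"
  unfolding rename_forms_def flabels_def by (rule trans[OF image_mset_cong image_mset_id]) force

text \<open>The renaming \<^term>\<open>\<sigma>\<close> need not be injective: in the cases \<open>BoxR\<close> and \<open>DiaL\<close> a fresh
  label \<open>y\<close> of the premiss is sent to an arbitrary \<open>y'\<close> by \<open>\<sigma>(y := y')\<close>, which does not
  disturb the rest of the sequent.\<close>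

lemma lderiv_rename:
  "lderiv E I u \<Longrightarrow> lderiv (rename_edges \<sigma> E) (rename_forms \<sigma> I) (\<sigma> (fst u), snd u)"
proof (induction arbitrary: \<sigma> rule: lderiv.induct)
  case (BoxL x e z E a b I u)
  then show ?case by (auto intro!: lderiv.BoxL rename_edges_mem)
next
  case (DiaR x e z E a b I)
  then show ?case by (auto intro!: lderiv.DiaR rename_edges_mem)
next
  case (BoxR F x a E I b)
  show ?case
  proof (simp only: fst_conv snd_conv, rule lderiv.BoxR[of "{}"], safe)
    fix y'
    obtain y where y: "y \<notin> F \<union> elabels E \<union> flabels I \<union> {x}"
      using ex_fresh_label[of "F \<union> elabels E \<union> flabels I \<union> {x}"] BoxR(1) by auto
    let ?\<sigma> = "\<sigma>(y := y')"
    have "lderiv (rename_edges ?\<sigma> (add_mset (x,a,y) E)) (rename_forms ?\<sigma> I) (?\<sigma> y, b)"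
      using BoxR(2) y by (metis UnCI fst_conv snd_conv)
    moreover have "rename_edges ?\<sigma> E = rename_edges \<sigma> E" "rename_forms ?\<sigma> I = rename_forms \<sigma> I"
      by (rule rename_edges_cong rename_forms_cong, use y in auto)+
    ultimately show "lderiv (add_mset (\<sigma> x, a, y') (rename_edges \<sigma> E)) (rename_forms \<sigma> I) (y', b)"
      using y by auto
  qed
next
  case (DiaL F x a E b I u)
  show ?case
  proof (simp, rule lderiv.DiaL[of "{}"], safe)
    fix y'
    obtain y where y: "y \<notin> F \<union> elabels E \<union> flabels I \<union> {x, fst u}"
      using ex_fresh_label[of "F \<union> elabels E \<union> flabels I \<union> {x, fst u}"] DiaL(1) by auto
    let ?\<sigma> = "\<sigma>(y := y')"
    have "lderiv (rename_edges ?\<sigma> (add_mset (x,a,y) E)) (rename_forms ?\<sigma> (add_mset (y,b) I))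
        (?\<sigma> (fst u), snd u)"
      using DiaL(2) y by blast
    moreover have "rename_edges ?\<sigma> E = rename_edges \<sigma> E" "rename_forms ?\<sigma> I = rename_forms \<sigma> I"
      by (rule rename_edges_cong rename_forms_cong, use y in auto)+
    ultimately show "lderiv (add_mset (\<sigma> x, a, y') (rename_edges \<sigma> E)) (add_mset (y', b) (rename_forms \<sigma> I))
        (\<sigma> (fst u), snd u)"
      using y by auto
  qed
qed (auto intro: lderiv.intros)

lemma lderiv_rename_fresh_input:
  assumes "lderiv (add_mset (x,a,y) E) (add_mset (y,b) I) u"
    and "y \<notin> elabels E" "y \<notin> flabels I" "y \<noteq> x" "y \<noteq> fst u"
  shows "lderiv (add_mset (x,a,z) E) (add_mset (z,b) I) u"
proof -
  have "lderiv (rename_edges (id(y:=z)) (add_mset (x,a,y) E))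
      (rename_forms (id(y:=z)) (add_mset (y,b) I)) u"
    using lderiv_rename[OF assms(1), of "id(y:=z)"] assms by (cases u) auto
  moreover have "rename_edges (id(y:=z)) E = E" "rename_forms (id(y:=z)) I = I"
    by (rule rename_edges_id rename_forms_id, use assms in auto)+
  ultimately show ?thesis using assms by simp
qed

lemma lderiv_rename_fresh_output:
  assumes "lderiv (add_mset (x,a,y) E) I (y,b)" "y \<notin> elabels E" "y \<notin> flabels I" "y \<noteq> x"
  shows "lderiv (add_mset (x,a,z) E) I (z,b)"
proof -
  have "lderiv (rename_edges (id(y:=z)) (add_mset (x,a,y) E)) (rename_forms (id(y:=z)) I) (z,b)"
    using lderiv_rename[OF assms(1), of "id(y:=z)"] assms by auto
  moreover have "rename_edges (id(y:=z)) E = E" "rename_forms (id(y:=z)) I = I"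
    by (rule rename_edges_id rename_forms_id, use assms in auto)+
  ultimately show ?thesis using assms by simp
qed

lemma lderiv_id: "lderiv E (add_mset (x,\<phi>) I) (x,\<phi>)"
proof (induction \<phi> arbitrary: E I x)
  case (Atom p) then show ?case by (rule lderiv.Init)
next
  case Bot then show ?case by (rule lderiv.BotL)
next
  case (And a b)
  show ?case
    by (rule lderiv.AndL, rule lderiv.AndR, rule And.IH(1), subst add_mset_commute, rule And.IH(2))
next
  case (Or a b)
  show ?case by (rule lderiv.OrL, rule lderiv.OrR1, rule Or.IH(1), rule lderiv.OrR2, rule Or.IH(2))
next
  case (Imp a b)
  show ?case
  proof (rule lderiv.ImpR, subst add_mset_commute, rule lderiv.ImpL)
    show "lderiv E (add_mset (x, Imp a b) (add_mset (x, a) I)) (x, a)"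
      by (subst add_mset_commute, rule Imp.IH(1))
    show "lderiv E (add_mset (x, b) (add_mset (x, a) I)) (x, b)" by (rule Imp.IH(2))
  qed
next
  case (BoxArr a b)
  show ?case
  proof (rule lderiv.BoxR[of "{}"], safe)
    fix y
    show "lderiv (add_mset (x, a, y) E) (add_mset (x, BoxArr a b) I) (y, b)"
      by (rule lderiv.BoxL[of x a y]) (use BoxArr in auto)
  qed
next
  case (DiaArr a b)
  show ?case
  proof (rule lderiv.DiaL[of "{}"], safe)
    fix y
    show "lderiv (add_mset (x, a, y) E) (add_mset (y, b) I) (x, DiaArr a b)"
      by (rule lderiv.DiaR[of x a y]) (use DiaArr in auto)
  qed
qed

lemma lderiv_remove_edge:
  assumes "lderiv (add_mset (x,a,z) E) I u" "(x,e,z) \<in># E" "lentails a e" "lentails e a"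
    and tr: "\<And>c d. lentails c a \<Longrightarrow> lentails a d \<Longrightarrow> lentails c d"
  shows "lderiv E I u"
proof -
  have "lderiv E I u" if "lderiv E' I u" "E' = add_mset (x,a,z) E" "(x,e,z) \<in># E"
    for E' E :: "'a edges" and I u
    using that
  proof (induction arbitrary: E rule: lderiv.induct)
    case (BoxL x' e' z' E'' a' b I u)
    have IH: "lderiv E (add_mset (z', b) (add_mset (x', BoxArr a' b) I)) u" using BoxL by auto
    show ?case
    proof (cases "(x',e',z') = (x,a,z)")
      case True
      then show ?thesis using BoxL tr assms(3,4) IH by (auto intro!: lderiv.BoxL[of x e z])
    next
      case False
      then show ?thesis using BoxL IH by (auto intro!: lderiv.BoxL[of x' e' z'])
    qed
  next
    case (DiaR x' e' z' E'' a' I b)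
    have IH: "lderiv E I (z',b)" using DiaR by auto
    show ?case
    proof (cases "(x',e',z') = (x,a,z)")
      case True
      then show ?thesis using DiaR tr assms(3,4) IH by (auto intro!: lderiv.DiaR[of x e z])
    next
      case False
      then show ?thesis using DiaR IH by (auto intro!: lderiv.DiaR[of x' e' z'])
    qed
  next
    case (BoxR F x' a' E'' I b)
    show ?case
      by (rule lderiv.BoxR[of F]) (use BoxR in \<open>auto simp: add_mset_commute\<close>)
  next
    case (DiaL F x' a' E'' b I u)
    show ?case
      by (rule lderiv.DiaL[of F]) (use DiaL in \<open>auto simp: add_mset_commute\<close>)
  qed (auto intro: lderiv.intros)
  then show ?thesis using assms(1,2) by blast
qed

section \<open>Invertibility\<close>

lemma add_mset_eq_cases:
  assumes "add_mset a J = add_mset b I"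
  obtains "a = b" "J = I" | K where "J = add_mset b K" "I = add_mset a K"
  using assms by (metis add_eq_conv_ex)

text \<open>Induction on a derivation of a sequent with the input \<open>x : \<phi>\<close>, following this input upwards.
  An invariant \<^term>\<open>Q\<close> of edges and remaining inputs must survive the non-principal rules, and
  each rule that has \<open>x : \<phi>\<close> as principal formula is handled by one of the hypotheses \<open>P\<dots>\<close>.
  The conclusion may add edges \<^term>\<open>N\<close> and inputs \<^term>\<open>M\<close>, and the fresh labels chosen
  along the way avoid \<^term>\<open>B\<close>; this covers both the inversion lemmas and the principal cases
  of cut for \<open>\<rightarrow>\<close> and \<open>\<box>\<rightarrow>\<close>.\<close>

lemma lderiv_input_induct:
  assumes "lderiv E J u" "J = add_mset (x,\<phi>) I" "Q E I" "B \<inter> labels E J u = {}"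
    and fB: "finite B" and nb: "\<phi> \<noteq> Bot"
    and Qw: "\<And>E I z c. Q E I \<Longrightarrow> Q E (add_mset (z,c) I)"
    and QwE: "\<And>E I v. Q E I \<Longrightarrow> Q (add_mset v E) I"
    and Qand: "\<And>E I z c d. Q E (add_mset (z, And c d) I) \<Longrightarrow> Q E (add_mset (z,c) (add_mset (z,d) I))"
    and Qor1: "\<And>E I z c d. Q E (add_mset (z, Or c d) I) \<Longrightarrow> Q E (add_mset (z,c) I)"
    and Qor2: "\<And>E I z c d. Q E (add_mset (z, Or c d) I) \<Longrightarrow> Q E (add_mset (z,d) I)"
    and Qimp: "\<And>E I z c d. Q E (add_mset (z, Imp c d) I) \<Longrightarrow> Q E (add_mset (z,d) I)"
    and Qdia: "\<And>E I z c d y. Q E (add_mset (z, DiaArr c d) I) \<Longrightarrow> y \<notin> elabels E \<Longrightarrow> y \<notin> flabels I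
      \<Longrightarrow> y \<noteq> z \<Longrightarrow> y \<noteq> x \<Longrightarrow> y \<notin> B \<Longrightarrow> Q (add_mset (z,c,y) E) (add_mset (y,d) I)"
    and Pinit: "\<And>E I p. \<phi> = Atom p \<Longrightarrow> Q E I \<Longrightarrow> B \<inter> labels E (add_mset (x,\<phi>) I) (x,\<phi>) = {}
      \<Longrightarrow> lderiv (E+N) (I+M) (x, Atom p)"
    and Pand: "\<And>E I u c d. \<phi> = And c d \<Longrightarrow> Q E I \<Longrightarrow> B \<inter> labels E (add_mset (x,\<phi>) I) u = {}
      \<Longrightarrow> lderiv E (add_mset (x,c) (add_mset (x,d) I)) u \<Longrightarrow> lderiv (E+N) (I+M) u"
    and Por: "\<And>E I u c d. \<phi> = Or c d \<Longrightarrow> Q E I \<Longrightarrow> B \<inter> labels E (add_mset (x,\<phi>) I) u = {}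
      \<Longrightarrow> lderiv E (add_mset (x,c) I) u \<Longrightarrow> lderiv E (add_mset (x,d) I) u \<Longrightarrow> lderiv (E+N) (I+M) u"
    and Pimp: "\<And>E I u c d. \<phi> = Imp c d \<Longrightarrow> Q E I \<Longrightarrow> B \<inter> labels E (add_mset (x,\<phi>) I) u = {}
      \<Longrightarrow> lderiv (E+N) (I+M) (x,c) \<Longrightarrow> lderiv E (add_mset (x,d) I) u \<Longrightarrow> lderiv (E+N) (I+M) u"
    and Pbox: "\<And>E I u c d e z. \<phi> = BoxArr c d \<Longrightarrow> Q E I \<Longrightarrow> B \<inter> labels E (add_mset (x,\<phi>) I) u = {}
      \<Longrightarrow> (x,e,z) \<in># E \<Longrightarrow> lentails c e \<Longrightarrow> lentails e c \<Longrightarrow> lderiv (E+N) (add_mset (z,d) I + M) u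
      \<Longrightarrow> lderiv (E+N) (I+M) u"
    and Pdia: "\<And>E I u c d F. \<phi> = DiaArr c d \<Longrightarrow> Q E I \<Longrightarrow> B \<inter> labels E (add_mset (x,\<phi>) I) u = {}
      \<Longrightarrow> finite F \<Longrightarrow> (\<forall>y. y \<notin> F \<longrightarrow> lderiv (add_mset (x,c,y) E) (add_mset (y,d) I) u)
      \<Longrightarrow> lderiv (E+N) (I+M) u"
  shows "lderiv (E+N) (I+M) u"
  using assms(1-4)
proof (induction arbitrary: I rule: lderiv.induct)
  case (Init E z p K)
  from Init(1) show ?case
  proof (cases rule: add_mset_eq_cases)
    case 1 then show ?thesis using Pinit[of p E I] Init by auto
  next
    case (2 K') then show ?thesis by (simp add: lderiv.Init)
  qed
next
  case (BotL E z K u)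
  from BotL(1) show ?case
  proof (cases rule: add_mset_eq_cases)
    case 1 then show ?thesis using nb by auto
  next
    case (2 K') then show ?thesis by (simp add: lderiv.BotL)
  qed
next
  case (AndL E z a b K u)
  from AndL(3) show ?case
  proof (cases rule: add_mset_eq_cases)
    case 1 then show ?thesis using Pand[of a b E I u] AndL by auto
  next
    case (2 K')
    have "lderiv (E+N) (add_mset (z,a) (add_mset (z,b) K') + M) u"
      by (rule AndL.IH) (use 2 AndL Qand in \<open>auto simp: add_mset_commute labels_def\<close>)
    then show ?thesis using 2 by (simp add: lderiv.AndL)
  qed
next
  case (AndR E K z a b)
  show ?case
    by (rule lderiv.AndR; rule AndR.IH) (use AndR in \<open>auto simp: labels_def\<close>)
next
  case (OrL E z a K u b)
  from OrL(5) show ?case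
  proof (cases rule: add_mset_eq_cases)
    case 1 then show ?thesis using Por[of a b E I u] OrL by auto
  next
    case (2 K')
    have "lderiv (E+N) (add_mset (z,a) K' + M) u"
      by (rule OrL.IH) (use 2 OrL Qor1 in \<open>auto simp: add_mset_commute labels_def\<close>)
    moreover have "lderiv (E+N) (add_mset (z,b) K' + M) u"
      by (rule OrL.IH) (use 2 OrL Qor2 in \<open>auto simp: add_mset_commute labels_def\<close>)
    ultimately show ?thesis using 2 by (simp add: lderiv.OrL)
  qed
next
  case (OrR1 E K z a b)
  show ?case
    by (rule lderiv.OrR1, rule OrR1.IH) (use OrR1 in \<open>auto simp: labels_def\<close>)
next
  case (OrR2 E K z b a)
  show ?case
    by (rule lderiv.OrR2, rule OrR2.IH) (use OrR2 in \<open>auto simp: labels_def\<close>)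
next
  case (ImpL E z a b K u)
  from ImpL(5) show ?case
  proof (cases rule: add_mset_eq_cases)
    case 1
    have "lderiv (E+N) (I+M) (z,a)"
      by (rule ImpL.IH(1)) (use 1 ImpL in \<open>auto simp: labels_def\<close>)
    then have "lderiv (E+N) (I+M) (x,a)" using 1 by simp
    then show ?thesis using Pimp[of a b E I u] ImpL 1 by auto
  next
    case (2 K')
    have "lderiv (E+N) (add_mset (z, Imp a b) K' + M) (z,a)"
      by (rule ImpL.IH(1)) (use 2 ImpL in \<open>auto simp: add_mset_commute labels_def\<close>)
    moreover have "lderiv (E+N) (add_mset (z,b) K' + M) u"
      by (rule ImpL.IH(2)) (use 2 ImpL Qimp in \<open>auto simp: add_mset_commute labels_def\<close>)
    ultimately show ?thesis using 2 by (simp add: lderiv.ImpL)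
  qed
next
  case (ImpR E z a K b)
  show ?case
  proof (rule lderiv.ImpR)
    show "lderiv (E+N) (add_mset (z,a) (I + M)) (z,b)"
      using ImpR.IH[of "add_mset (z,a) I"] ImpR Qw by (auto simp: add_mset_commute labels_def)
  qed
next
  case (BoxL z e w E a b K u)
  from BoxL.prems(1) show ?case
  proof (cases rule: add_mset_eq_cases)
    case 1
    have "lderiv (E+N) (add_mset (w,b) I + M) u"
      by (rule BoxL.IH(3)) (use 1 BoxL Qw in \<open>auto simp: add_mset_commute labels_def dest: elabels_mem\<close>)
    then show ?thesis using Pbox[of a b E I u e w] BoxL 1 by auto
  next
    case (2 K')
    have "lderiv (E+N) (add_mset (w,b) (add_mset (z, BoxArr a b) K') + M) u"
      by (rule BoxL.IH(3)) (use 2 BoxL Qw in \<open>auto simp: add_mset_commute labels_def dest: elabels_mem\<close>)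
    then show ?thesis using 2 BoxL.hyps(1-3) by (simp, intro lderiv.BoxL[of z e w]) auto
  qed
next
  case (BoxR F z a E K b)
  show ?case
  proof (rule lderiv.BoxR[of "F \<union> B"])
    show "finite (F \<union> B)" using BoxR fB by auto
    show "\<forall>y. y \<notin> F \<union> B \<longrightarrow> lderiv (add_mset (z, a, y) (E + N)) (I + M) (y, b)"
    proof (intro allI impI)
      fix y assume "y \<notin> F \<union> B"
      then have y: "y \<notin> F" "y \<notin> B" by auto
      have "lderiv (add_mset (z, a, y) E + N) (I + M) (y, b)"
        using BoxR(2) y BoxR(3-) QwE by (auto simp: labels_def)
      then show "lderiv (add_mset (z, a, y) (E + N)) (I + M) (y, b)" by simp
    qed
  qed
next
  case (DiaL F z a E b K u)
  from DiaL(3) show ?case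
  proof (cases rule: add_mset_eq_cases)
    case 1 then show ?thesis using Pdia[of a b E I u F] DiaL by auto
  next
    case (2 K')
    let ?F = "F \<union> B \<union> labels E (add_mset (z, DiaArr a b) K) u"
    have "lderiv (add_mset (z,a,y) E + N) (add_mset (y,b) K' + M) u" if y: "y \<notin> ?F" for y
    proof -
      have "add_mset (y,b) K = add_mset (x,\<phi>) (add_mset (y,b) K')"
        using 2 by (simp add: add_mset_commute)
      moreover have "Q (add_mset (z,a,y) E) (add_mset (y,b) K')"
        by (rule Qdia) (use 2 DiaL y in \<open>auto simp: labels_def\<close>)
      moreover have "B \<inter> labels (add_mset (z,a,y) E) (add_mset (y,b) K) u = {}"
        using DiaL(5) y by (auto simp: labels_def)
      ultimately show ?thesis using DiaL(2) y by blast
    qed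
    then have "lderiv (E + N) (add_mset (z, DiaArr a b) (K' + M)) u"
      using DiaL(1) fB by (intro lderiv.DiaL[of ?F]) simp_all
    then show ?thesis using 2 by simp
  qed
next
  case (DiaR z e w E a K b)
  have "lderiv (E+N) (I+M) (w,b)"
    by (rule DiaR.IH(3)) (use DiaR in \<open>auto simp: labels_def dest: elabels_mem\<close>)
  then show ?case using DiaR.hyps(1-3) by (intro lderiv.DiaR[of z e w]) auto
qed

lemma lderiv_AndL_inv:
  assumes "lderiv E (add_mset (x, And a b) I) u"
  shows "lderiv E (add_mset (x,a) (add_mset (x,b) I)) u"
proof -
  have "lderiv (E + {#}) (I + {#(x,a),(x,b)#}) u"
    by (rule lderiv_input_induct[OF assms refl, where Q="\<lambda>_ _. True" and B="{}"])
      (auto simp: add_mset_commute)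
  then show ?thesis by (simp add: add_mset_commute)
qed

lemma lderiv_OrL_inv1:
  assumes "lderiv E (add_mset (x, Or a b) I) u"
  shows "lderiv E (add_mset (x,a) I) u"
proof -
  have "lderiv (E + {#}) (I + {#(x,a)#}) u"
    by (rule lderiv_input_induct[OF assms refl, where Q="\<lambda>_ _. True" and B="{}"])
      (auto simp: add_mset_commute)
  then show ?thesis by (simp add: add_mset_commute)
qed

lemma lderiv_OrL_inv2:
  assumes "lderiv E (add_mset (x, Or a b) I) u"
  shows "lderiv E (add_mset (x,b) I) u"
proof -
  have "lderiv (E + {#}) (I + {#(x,b)#}) u"
    by (rule lderiv_input_induct[OF assms refl, where Q="\<lambda>_ _. True" and B="{}"])
      (auto simp: add_mset_commute)
  then show ?thesis by (simp add: add_mset_commute)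
qed

lemma lderiv_ImpL_inv:
  assumes "lderiv E (add_mset (x, Imp a b) I) u"
  shows "lderiv E (add_mset (x,b) I) u"
proof -
  have "lderiv (E + {#}) (I + {#(x,b)#}) u"
    by (rule lderiv_input_induct[OF assms refl, where Q="\<lambda>_ _. True" and B="{}"])
      (auto simp: add_mset_commute)
  then show ?thesis by (simp add: add_mset_commute)
qed

lemma lderiv_DiaL_inv:
  assumes "lderiv E (add_mset (x, DiaArr a b) I) u" "y \<notin> labels E (add_mset (x, DiaArr a b) I) u"
  shows "lderiv (add_mset (x,a,y) E) (add_mset (y,b) I) u"
proof -
  have "lderiv (E + {#(x,a,y)#}) (I + {#(y,b)#}) u"
  proof (rule lderiv_input_induct[OF assms(1) refl, where Q="\<lambda>_ _. True" and B="{y}"])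
    fix E' I' u' c d F
    assume h: "DiaArr a b = DiaArr c d" "{y} \<inter> labels E' (add_mset (x, DiaArr a b) I') u' = {}"
      "finite F" "\<forall>y. y \<notin> F \<longrightarrow> lderiv (add_mset (x, c, y) E') (add_mset (y, d) I') u'"
    obtain y' where y': "y' \<notin> F \<union> labels E' (add_mset (x, DiaArr a b) I') u' \<union> {y}"
      using ex_fresh_label[of "F \<union> labels E' (add_mset (x, DiaArr a b) I') u' \<union> {y}"] h(3) by auto
    have "lderiv (add_mset (x, a, y') E') (add_mset (y', b) I') u'" using h y' by auto
    then have "lderiv (add_mset (x, a, y) E') (add_mset (y, b) I') u'"
      by (rule lderiv_rename_fresh_input) (use y' in \<open>auto simp: labels_def\<close>)
    then show "lderiv (E' + {#(x, a, y)#}) (I' + {#(y, b)#}) u'" by simp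
  qed (use assms(2) in auto)
  then show ?thesis by simp
qed

lemma lderiv_contract_Atom:
  assumes "lderiv E (add_mset (x, Atom p) I) u" "(x, Atom p) \<in># I"
  shows "lderiv E I u"
proof -
  have "lderiv (E + {#}) (I + {#}) u"
    by (rule lderiv_input_induct[OF assms(1) refl, where Q="\<lambda>_ I. (x, Atom p) \<in># I" and B="{}"])
       (use assms(2) in \<open>auto intro: lderiv.Init[of _ x p, simplified] dest: multi_member_split\<close>)
  then show ?thesis by simp
qed

lemma lderiv_DiaL_inv_fresh:
  assumes "lderiv E (add_mset (z, DiaArr c d) I) (w,f)"
    and "y \<notin> elabels E" "y \<notin> flabels I" "y \<noteq> z" "y \<noteq> w"
  shows "lderiv (add_mset (z,c,y) E) (add_mset (y,d) I) (w,f)"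
  by (rule lderiv_DiaL_inv) (use assms in \<open>auto simp: labels_def\<close>)

section \<open>Cut admissibility\<close>

definition cut_admissible :: "'a fm \<Rightarrow> bool" where
  "cut_admissible \<phi> \<longleftrightarrow>
     (\<forall>E I x u. lderiv E I (x,\<phi>) \<longrightarrow> lderiv E (add_mset (x,\<phi>) I) u \<longrightarrow> lderiv E I u)"

lemma cut_admissibleD:
  "cut_admissible \<phi> \<Longrightarrow> lderiv E I (x,\<phi>) \<Longrightarrow> lderiv E (add_mset (x,\<phi>) I) u \<Longrightarrow> lderiv E I u"
  unfolding cut_admissible_def by blast

lemma lentails_trans: "cut_admissible a \<Longrightarrow> lentails c a \<Longrightarrow> lentails a d \<Longrightarrow> lentails c d"
  by (erule cut_admissibleD, assumption, subst add_mset_commute, erule lderiv_weaken1)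

lemma lderiv_cut_And:
  assumes "cut_admissible a" "cut_admissible b" "lderiv E I (x,a)" "lderiv E I (x,b)"
    and "lderiv E (add_mset (x, And a b) I) u"
  shows "lderiv E I u"
proof -
  have "lderiv E (add_mset (x,a) (add_mset (x,b) I)) u"
    using assms(5) by (rule lderiv_AndL_inv)
  then have "lderiv E (add_mset (x,b) I) u"
    by (rule cut_admissibleD[OF assms(1) lderiv_weaken1[OF assms(3)]])
  then show ?thesis by (rule cut_admissibleD[OF assms(2) assms(4)])
qed

lemma lderiv_cut_Or1:
  "cut_admissible a \<Longrightarrow> lderiv E I (x,a) \<Longrightarrow> lderiv E (add_mset (x, Or a b) I) u \<Longrightarrow> lderiv E I u"
  by (erule cut_admissibleD, assumption, erule lderiv_OrL_inv1)

lemma lderiv_cut_Or2: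
  "cut_admissible b \<Longrightarrow> lderiv E I (x,b) \<Longrightarrow> lderiv E (add_mset (x, Or a b) I) u \<Longrightarrow> lderiv E I u"
  by (erule cut_admissibleD, assumption, erule lderiv_OrL_inv2)

lemma lderiv_cut_Imp:
  assumes ca: "cut_admissible a" and cb: "cut_admissible b"
    and "lderiv E (add_mset (x,a) I) (x,b)" "lderiv E (add_mset (x, Imp a b) I) u"
  shows "lderiv E I u"
proof -
  have "lderiv (E + {#}) (I + {#}) u"
  proof (rule lderiv_input_induct[OF assms(4) refl,
        where Q = "\<lambda>E I. lderiv E (add_mset (x,a) I) (x,b)" and B = "{}"])
    fix E' I' u' c d
    assume "Imp a b = Imp c d" "lderiv E' (add_mset (x,a) I') (x,b)"
      "lderiv (E' + {#}) (I' + {#}) (x,c)" "lderiv E' (add_mset (x,d) I') u'"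
    then show "lderiv (E' + {#}) (I' + {#}) u'"
      using cut_admissibleD[OF ca, of E' I' x "(x,b)"] cut_admissibleD[OF cb, of E' I' x u'] by auto
  qed (use assms(3) in \<open>auto simp: add_mset_commute[of "(x,a)"] intro: lderiv_weaken1 lderiv_weaken_edge1
         lderiv_AndL_inv lderiv_OrL_inv1 lderiv_OrL_inv2 lderiv_ImpL_inv lderiv_DiaL_inv_fresh\<close>)
  then show ?thesis by simp
qed

lemma lderiv_cut_Box:
  assumes ca: "cut_admissible a" and cb: "cut_admissible b"
    and "finite F" "\<forall>y. y \<notin> F \<longrightarrow> lderiv (add_mset (x,a,y) E) I (y,b)"
    and "lderiv E (add_mset (x, BoxArr a b) I) u"
  shows "lderiv E I u"
proof -
  let ?Q = "\<lambda>E I. \<exists>F. finite F \<and> (\<forall>y. y \<notin> F \<longrightarrow> lderiv (add_mset (x,a,y) E) I (y,b))"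
  have "lderiv (E + {#}) (I + {#}) u"
  proof (rule lderiv_input_induct[OF assms(5) refl, where Q = ?Q and B = "{}"])
    fix E' I' u' c d e w
    assume h: "BoxArr a b = BoxArr c d" "?Q E' I'" "(x,e,w) \<in># E'" "lentails c e" "lentails e c"
      "lderiv (E' + {#}) (add_mset (w,d) I' + {#}) u'"
    from h(2) obtain F' where F': "finite F'" "\<forall>y. y \<notin> F' \<longrightarrow> lderiv (add_mset (x,a,y) E') I' (y,b)"
      by blast
    obtain y where y: "y \<notin> F' \<union> labels E' I' (x,a) \<union> {w}"
      using ex_fresh_label[of "F' \<union> labels E' I' (x,a) \<union> {w}"] F' by auto
    have "lderiv (add_mset (x,a,y) E') I' (y,b)" using F' y by auto
    then have "lderiv (add_mset (x,a,w) E') I' (w,b)"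
      by (rule lderiv_rename_fresh_output) (use y in \<open>auto simp: labels_def\<close>)
    then have "lderiv E' I' (w,b)"
      by (rule lderiv_remove_edge[OF _ h(3)]) (use h lentails_trans[OF ca] in auto)
    then show "lderiv (E' + {#}) (I' + {#}) u'" using cut_admissibleD[OF cb, of E' I' w u'] h by auto
  next
    fix E' I' z c d y0
    assume h: "?Q E' (add_mset (z, DiaArr c d) I')" "y0 \<notin> elabels E'" "y0 \<notin> flabels I'"
      "y0 \<noteq> z" "y0 \<noteq> x"
    then obtain F' where F': "finite F'"
      "\<forall>y. y \<notin> F' \<longrightarrow> lderiv (add_mset (x,a,y) E') (add_mset (z, DiaArr c d) I') (y,b)"
      by blast
    have "lderiv (add_mset (z,c,y0) (add_mset (x,a,y) E')) (add_mset (y0,d) I') (y,b)"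
      if "y \<notin> insert y0 F'" for y
      by (rule lderiv_DiaL_inv_fresh) (use F' that h in auto)
    then have "\<forall>y. y \<notin> insert y0 F' \<longrightarrow>
        lderiv (add_mset (x,a,y) (add_mset (z,c,y0) E')) (add_mset (y0,d) I') (y,b)"
      by (simp add: add_mset_commute)
    then show "?Q (add_mset (z,c,y0) E') (add_mset (y0,d) I')"
      using F'(1) finite.insertI by blast
  next
    show "?Q E I" using assms(3,4) by blast
  next
    fix E' I' v
    assume "?Q E' I'"
    then show "?Q (add_mset v E') I'" by (auto simp: add_mset_commute intro: lderiv_weaken_edge1)
  next
    fix E' I' z c
    assume "?Q E' I'"
    then show "?Q E' (add_mset (z,c) I')" by (auto intro: lderiv_weaken1)
  next
    fix E' I' z c d
    assume "?Q E' (add_mset (z, And c d) I')"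
    then show "?Q E' (add_mset (z,c) (add_mset (z,d) I'))" by (auto intro: lderiv_AndL_inv)
  next
    fix E' I' z c d
    assume "?Q E' (add_mset (z, Or c d) I')"
    then show "?Q E' (add_mset (z,c) I')" by (auto intro: lderiv_OrL_inv1)
  next
    fix E' I' z c d
    assume "?Q E' (add_mset (z, Or c d) I')"
    then show "?Q E' (add_mset (z,d) I')" by (auto intro: lderiv_OrL_inv2)
  next
    fix E' I' z c d
    assume "?Q E' (add_mset (z, Imp c d) I')"
    then show "?Q E' (add_mset (z,d) I')" by (auto intro: lderiv_ImpL_inv)
  qed simp_all
  then show ?thesis by simp
qed

lemma lderiv_cut_Dia:
  assumes ca: "cut_admissible a" and cb: "cut_admissible b"
    and e: "(x,e,w) \<in># E" "lentails a e" "lentails e a"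
    and "lderiv E I (w,b)" "lderiv E (add_mset (x, DiaArr a b) I) u"
  shows "lderiv E I u"
proof -
  obtain y where y: "y \<notin> labels E (add_mset (x, DiaArr a b) I) u"
    using ex_fresh_label[OF finite_labels] by blast
  have "lderiv (add_mset (x,a,y) E) (add_mset (y,b) I) u"
    using assms(7) y by (rule lderiv_DiaL_inv)
  then have "lderiv (add_mset (x,a,w) E) (add_mset (w,b) I) u"
    by (rule lderiv_rename_fresh_input) (use y in \<open>auto simp: labels_def\<close>)
  then have "lderiv E (add_mset (w,b) I) u"
    by (rule lderiv_remove_edge[OF _ e(1)]) (use e lentails_trans[OF ca] in auto)
  then show ?thesis by (rule cut_admissibleD[OF cb assms(6)])
qed

text \<open>A left rule is permuted below the cut, using the
  corresponding inversion on the right premiss; a right rule makes the cut formula principal,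
  and the lemmas above reduce the cut to cuts on its immediate subformulas.\<close>

lemma lderiv_cut_step:
  fixes \<phi> :: "'a fm"
  assumes sub: "\<And>\<psi>::'a fm. size \<psi> < size \<phi> \<Longrightarrow> cut_admissible \<psi>"
  shows "lderiv E I v \<Longrightarrow> v = (x,\<phi>) \<Longrightarrow> lderiv E (add_mset (x,\<phi>) I) u \<Longrightarrow> lderiv E I u"
proof (induction arbitrary: u rule: lderiv.induct)
  case (Init E z p K)
  then show ?case using lderiv_contract_Atom[of E x p "add_mset (x, Atom p) K" u] by auto
next
  case (BotL E z K v)
  show ?case by (rule lderiv.BotL)
next
  case (AndL E z a b K v)
  have "lderiv E (add_mset (x,\<phi>) (add_mset (z,a) (add_mset (z,b) K))) u"
    using lderiv_AndL_inv[of E z a b "add_mset (x,\<phi>) K" u] AndL.prems(2) by (simp add: add_mset_commute)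
  then show ?case by (rule lderiv.AndL[OF AndL.IH[OF AndL.prems(1)]])
next
  case (OrL E z a K v b)
  have "lderiv E (add_mset (x,\<phi>) (add_mset (z,a) K)) u" "lderiv E (add_mset (x,\<phi>) (add_mset (z,b) K)) u"
    using lderiv_OrL_inv1[of E z a b "add_mset (x,\<phi>) K" u] lderiv_OrL_inv2[of E z a b "add_mset (x,\<phi>) K" u]
      OrL.prems(2) by (simp_all add: add_mset_commute)
  then show ?case by (rule lderiv.OrL[OF OrL.IH(1)[OF OrL.prems(1)] OrL.IH(2)[OF OrL.prems(1)]])
next
  case (ImpL E z a b K v)
  have "lderiv E (add_mset (x,\<phi>) (add_mset (z,b) K)) u"
    using lderiv_ImpL_inv[of E z a b "add_mset (x,\<phi>) K" u] ImpL.prems(2) by (simp add: add_mset_commute)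
  then show ?case by (rule lderiv.ImpL[OF ImpL.hyps(1) ImpL.IH(2)[OF ImpL.prems(1)]])
next
  case (BoxL z e w E a b K v)
  have "lderiv E (add_mset (x,\<phi>) (add_mset (w, b) (add_mset (z, BoxArr a b) K))) u"
    using lderiv_weaken1[OF BoxL.prems(2), of "(w,b)"] by (simp add: add_mset_commute)
  then show ?case by (rule lderiv.BoxL[OF BoxL.hyps(1-3) BoxL.IH(3)[OF BoxL.prems(1)]])
next
  case (DiaL F z a E b K v)
  let ?F = "F \<union> labels E (add_mset (x,\<phi>) (add_mset (z, DiaArr a b) K)) u"
  have "lderiv (add_mset (z,a,y) E) (add_mset (y,b) K) u" if y: "y \<notin> ?F" for y
  proof -
    have "lderiv (add_mset (z,a,y) E) (add_mset (x,\<phi>) (add_mset (y,b) K)) u"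
      using lderiv_DiaL_inv[of E z a b "add_mset (x,\<phi>) K" u y] y DiaL.prems(2)
      by (simp add: add_mset_commute labels_def)
    then show ?thesis using DiaL.IH y DiaL.prems(1) by blast
  qed
  then show ?case using DiaL.hyps(1) by (intro lderiv.DiaL[of ?F]) auto
next
  case (AndR E I z a b)
  then have "z = x" "\<phi> = And a b" by auto
  then show ?case using AndR lderiv_cut_And[of a b E I x u] sub[of a] sub[of b] by simp
next
  case (OrR1 E I z a b)
  then have "z = x" "\<phi> = Or a b" by auto
  then show ?case using OrR1 lderiv_cut_Or1[of a E I x b u] sub[of a] by simp
next
  case (OrR2 E I z b a)
  then have "z = x" "\<phi> = Or a b" by auto
  then show ?case using OrR2 lderiv_cut_Or2[of b E I x a u] sub[of b] by simp
next
  case (ImpR E z a I b)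
  then have "z = x" "\<phi> = Imp a b" by auto
  then show ?case using ImpR lderiv_cut_Imp[of a b E x I u] sub[of a] sub[of b] by simp
next
  case (BoxR F z a E I b)
  then have "z = x" "\<phi> = BoxArr a b" by auto
  then show ?case using BoxR lderiv_cut_Box[of a b F x E I u] sub[of a] sub[of b] by simp
next
  case (DiaR z e w E a I b)
  then have "z = x" "\<phi> = DiaArr a b" by auto
  then show ?case using DiaR lderiv_cut_Dia[of a b x e w E I u] sub[of a] sub[of b] by simp
qed

lemma cut_admissible_all: "cut_admissible \<phi>"
proof (induction \<phi> rule: measure_induct_rule[of size])
  case (less \<phi>)
  show ?case unfolding cut_admissible_def using lderiv_cut_step[OF less] by blast
qed

lemma lderiv_cut: "lderiv E I (x,\<phi>) \<Longrightarrow> lderiv E (add_mset (x,\<phi>) I) u \<Longrightarrow> lderiv E I u"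
  using cut_admissibleD[OF cut_admissible_all] .

section \<open>Derived rules and the Hilbert system\<close>

lemma lderiv_assm: "(x,\<phi>) \<in># I \<Longrightarrow> lderiv E I (x,\<phi>)"
  by (metis lderiv_id insert_DiffM)

lemma lderiv_contract: "lderiv E (add_mset v I) u \<Longrightarrow> v \<in># I \<Longrightarrow> lderiv E I u"
  by (cases v) (auto intro: lderiv_cut lderiv_assm)

lemma lderiv_ImpL_mem:
  "(x, Imp a b) \<in># I \<Longrightarrow> lderiv E I (x,a) \<Longrightarrow> lderiv E (add_mset (x,b) I) u \<Longrightarrow> lderiv E I u"
  by (rule lderiv_contract[of E "(x, Imp a b)"], rule lderiv.ImpL) (auto intro: lderiv_weaken1)

lemma lderiv_BoxL_mem:
  "(x, BoxArr a b) \<in># I \<Longrightarrow> (x,e,z) \<in># E \<Longrightarrow> lentails a e \<Longrightarrow> lentails e a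
    \<Longrightarrow> lderiv E (add_mset (z,b) I) u \<Longrightarrow> lderiv E I u"
  by (rule lderiv_contract[of E "(x, BoxArr a b)"], rule lderiv.BoxL, assumption+,
      subst add_mset_commute, rule lderiv_weaken1)

lemma lderiv_AndL_mem:
  "(x, And a b) \<in># I \<Longrightarrow> lderiv E (add_mset (x,a) (add_mset (x,b) I)) u \<Longrightarrow> lderiv E I u"
  by (rule lderiv_contract[of E "(x, And a b)"], rule lderiv.AndL) (auto intro: lderiv_weaken1)

lemma lderiv_OrL_mem:
  "(x, Or a b) \<in># I \<Longrightarrow> lderiv E (add_mset (x,a) I) u \<Longrightarrow> lderiv E (add_mset (x,b) I) u
    \<Longrightarrow> lderiv E I u"
  by (rule lderiv_contract[of E "(x, Or a b)"], rule lderiv.OrL) (auto intro: lderiv_weaken1)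

lemma lderiv_DiaL_mem:
  "(x, DiaArr a b) \<in># I \<Longrightarrow> (\<And>y. lderiv (add_mset (x,a,y) E) (add_mset (y,b) I) u) \<Longrightarrow> lderiv E I u"
  by (rule lderiv_contract[of E "(x, DiaArr a b)"], rule lderiv.DiaL[of "{}"]) (auto intro: lderiv_weaken1)

lemma lderiv_BoxR_all: "(\<And>y. lderiv (add_mset (x,a,y) E) I (y,b)) \<Longrightarrow> lderiv E I (x, BoxArr a b)"
  by (rule lderiv.BoxR[of "{}"]) auto

lemma lderiv_ImpR_inv: "lderiv E I (x, Imp a b) \<Longrightarrow> lderiv E (add_mset (x,a) I) (x,b)"
  by (rule lderiv_cut[of _ _ x "Imp a b"], erule lderiv_weaken1, rule lderiv_ImpL_mem[of x a b])
    (auto intro: lderiv_assm)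

lemma lderiv_AndR_inv1: "lderiv E I (x, And a b) \<Longrightarrow> lderiv E I (x,a)"
  by (rule lderiv_cut[of _ _ x "And a b"], assumption, rule lderiv_AndL_mem[of x a b])
    (auto intro: lderiv_assm)

lemma lderiv_AndR_inv2: "lderiv E I (x, And a b) \<Longrightarrow> lderiv E I (x,b)"
  by (rule lderiv_cut[of _ _ x "And a b"], assumption, rule lderiv_AndL_mem[of x a b])
    (auto intro: lderiv_assm)

lemma lentails_at: "lentails a b \<Longrightarrow> lderiv E (add_mset (y,a) I) (y,b)"
proof -
  assume "lentails a b"
  from lderiv_rename[OF this, of "\<lambda>_. y"] have "lderiv {#} {#(y,a)#} (y,b)"
    by (simp add: rename_forms_def)
  from lderiv_weaken[OF this, of E I] show ?thesis by simp
qed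

lemma lderiv_Top: "lderiv E I (x, Top)"
  unfolding Top_def Neg_def by (rule lderiv.ImpR, rule lderiv.BotL)

lemma lentails_refl: "lentails a a"
  using lderiv_id[of "{#}" 0 a "{#}"] by simp

lemma lderiv_Imp_if_lentails: "lentails a b \<Longrightarrow> lderiv {#} {#} (0, Imp a b)"
  by (rule lderiv.ImpR) simp

lemma lderiv_Iff_iff: "lderiv {#} {#} (0, Iff a b) \<longleftrightarrow> lentails a b \<and> lentails b a"
proof
  assume "lderiv {#} {#} (0, Iff a b)"
  then show "lentails a b \<and> lentails b a"
    unfolding Iff_def using lderiv_ImpR_inv lderiv_AndR_inv1 lderiv_AndR_inv2 by fastforce
next
  assume "lentails a b \<and> lentails b a"
  then show "lderiv {#} {#} (0, Iff a b)"
    unfolding Iff_def by (auto intro!: lderiv.AndR lderiv.ImpR)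
qed

lemma lentails_BoxArr_cong:
  assumes "lentails p r" "lentails r p" "lentails q c"
  shows "lentails (BoxArr p q) (BoxArr r c)"
proof (rule lderiv_BoxR_all)
  fix y
  show "lderiv {#(0,r,y)#} {#(0, BoxArr p q)#} (y,c)"
    by (rule lderiv_BoxL_mem[of 0 p q _ r y]) (use assms lentails_at[OF assms(3)] in auto)
qed

lemma lentails_DiaArr_cong:
  assumes "lentails p r" "lentails r p" "lentails q c"
  shows "lentails (DiaArr p q) (DiaArr r c)"
proof (rule lderiv_DiaL_mem[of 0 p q], simp)
  fix y
  show "lderiv {#(0,p,y)#} {#(y,q), (0, DiaArr p q)#} (0, DiaArr r c)"
    by (rule lderiv.DiaR[of 0 p y]) (use assms lentails_at[OF assms(3)] in auto)
qed

lemma lentails_CM_Box: "lentails (BoxArr p (And q c)) (And (BoxArr p q) (BoxArr p c))"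
  by (intro lderiv.AndR lderiv_BoxR_all; rule lderiv_BoxL_mem[of 0 p "And q c" _ p], simp, simp,
      rule lentails_refl, rule lentails_refl, rule lderiv_AndL_mem, simp) (auto intro: lderiv_assm)

lemma lentails_CC_Box: "lentails (And (BoxArr p q) (BoxArr p c)) (BoxArr p (And q c))"
proof (rule lderiv.AndL, rule lderiv_BoxR_all, rule lderiv.AndR)
  fix y
  show "lderiv {#(0,p,y)#} {#(0, BoxArr p q), (0, BoxArr p c)#} (y,q)"
    by (rule lderiv_BoxL_mem[of 0 p q _ p y]) (auto intro: lderiv_id)
  show "lderiv {#(0,p,y)#} {#(0, BoxArr p q), (0, BoxArr p c)#} (y,c)"
    by (rule lderiv_BoxL_mem[of 0 p c _ p y]) (auto intro: lderiv_id)
qed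

lemma lentails_CM_Dia: "lentails (Or (DiaArr p q) (DiaArr p c)) (DiaArr p (Or q c))"
proof (rule lderiv.OrL)
  show "lderiv {#} {#(0, DiaArr p q)#} (0, DiaArr p (Or q c))"
    by (rule lentails_DiaArr_cong[OF lentails_refl lentails_refl lderiv.OrR1[OF lentails_refl]])
  show "lderiv {#} {#(0, DiaArr p c)#} (0, DiaArr p (Or q c))"
    by (rule lentails_DiaArr_cong[OF lentails_refl lentails_refl lderiv.OrR2[OF lentails_refl]])
qed

lemma lentails_CC_Dia: "lentails (DiaArr p (Or q c)) (Or (DiaArr p q) (DiaArr p c))"
proof (rule lderiv_DiaL_mem[of 0 p "Or q c"], simp)
  fix y :: nat
  let ?E = "{#(0,p,y)#}" and ?I = "{#(y, Or q c), (0, DiaArr p (Or q c))#}"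
  show "lderiv ?E ?I (0, Or (DiaArr p q) (DiaArr p c))"
  proof (rule lderiv_OrL_mem[of y q c], simp)
    show "lderiv ?E (add_mset (y,q) ?I) (0, Or (DiaArr p q) (DiaArr p c))"
      by (rule lderiv.OrR1, rule lderiv.DiaR[of 0 p y]) (auto intro: lentails_refl lderiv_assm)
    show "lderiv ?E (add_mset (y,c) ?I) (0, Or (DiaArr p q) (DiaArr p c))"
      by (rule lderiv.OrR2, rule lderiv.DiaR[of 0 p y]) (auto intro: lentails_refl lderiv_assm)
  qed
qed

lemma lentails_CW: "lentails (And (DiaArr p q) (BoxArr p c)) (DiaArr p (And q c))"
proof (rule lderiv.AndL, rule lderiv_DiaL_mem[of 0 p q], simp)
  fix y
  show "lderiv {#(0,p,y)#} {#(y,q), (0, DiaArr p q), (0, BoxArr p c)#} (0, DiaArr p (And q c))"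
    by (rule lderiv_BoxL_mem[of 0 p c _ p y], simp, simp, rule lentails_refl, rule lentails_refl,
        rule lderiv.DiaR[of 0 p y]) (auto intro: lentails_refl lderiv_assm intro!: lderiv.AndR)
qed

lemma lentails_CFS: "lentails (Imp (DiaArr p q) (BoxArr p c)) (BoxArr p (Imp q c))"
proof (rule lderiv_BoxR_all, rule lderiv.ImpR)
  fix y :: nat
  let ?E = "{#(0,p,y)#}" and ?I = "{#(y,q), (0, Imp (DiaArr p q) (BoxArr p c))#}"
  show "lderiv ?E ?I (y,c)"
  proof (rule lderiv_ImpL_mem[of 0 "DiaArr p q" "BoxArr p c"], simp)
    show "lderiv ?E ?I (0, DiaArr p q)"
      by (rule lderiv.DiaR[of 0 p y]) (auto intro: lentails_refl lderiv_assm)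
    show "lderiv ?E (add_mset (0, BoxArr p c) ?I) (y,c)"
      by (rule lderiv_BoxL_mem[of 0 p c _ p y]) (auto intro: lentails_refl lderiv_assm)
  qed
qed

lemma lderiv_if_hprov: "hprov \<phi> \<Longrightarrow> lderiv {#} {#} (0, \<phi>)"
proof (induction rule: hprov.induct)
  case (MP p q)
  then show ?case using lderiv_cut[OF MP.IH(2)] lderiv_ImpR_inv[OF MP.IH(1)] by simp
next
  case (RA_Box p r q)
  then show ?case by (simp add: lderiv_Iff_iff lentails_BoxArr_cong lentails_refl)
next
  case (RC_Box q c p)
  then show ?case by (simp add: lderiv_Iff_iff lentails_BoxArr_cong lentails_refl)
next
  case (RA_Dia p r q)
  then show ?case by (simp add: lderiv_Iff_iff lentails_DiaArr_cong lentails_refl)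
next
  case (RC_Dia q c p)
  then show ?case by (simp add: lderiv_Iff_iff lentails_DiaArr_cong lentails_refl)
next
  case (S p q r)
  show ?case
    by (intro lderiv.ImpR, rule lderiv_ImpL_mem[of 0 p "Imp q r"], simp, rule lderiv_assm, simp,
        rule lderiv_ImpL_mem[of 0 q r], simp, rule lderiv_ImpL_mem[of 0 p q], simp) (auto intro: lderiv_assm)
next
  case (OrE p r q)
  show ?case
    by (intro lderiv.ImpR, rule lderiv_OrL_mem[of 0 p q], simp, rule lderiv_ImpL_mem[of 0 p r], simp,
        rule lderiv_assm, simp, rule lderiv_assm, simp, rule lderiv_ImpL_mem[of 0 q r], simp,
        rule lderiv_assm, simp, rule lderiv_assm, simp)
next
  case (K p q)
  show ?case by (intro lderiv.ImpR lderiv_assm) simp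
next
  case (AndE1 p q)
  show ?case by (intro lderiv.ImpR lderiv.AndL lderiv_assm) simp
next
  case (AndE2 p q)
  show ?case by (intro lderiv.ImpR lderiv.AndL lderiv_assm) simp
next
  case (AndI p q)
  show ?case by (intro lderiv.ImpR lderiv.AndR lderiv_assm) simp_all
next
  case (OrI1 p q)
  show ?case by (intro lderiv.ImpR lderiv.OrR1 lderiv_assm) simp
next
  case (OrI2 q p)
  show ?case by (intro lderiv.ImpR lderiv.OrR2 lderiv_assm) simp
next
  case (BotE p)
  show ?case by (intro lderiv.ImpR lderiv.BotL)
next
  case (CN_Box p)
  show ?case by (intro lderiv_BoxR_all lderiv_Top)
next
  case (CN_Dia p)
  show ?case
    unfolding Neg_def by (rule lderiv.ImpR, rule lderiv_DiaL_mem[of 0 p Bot], simp, rule lderiv.BotL)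
qed (rule lderiv_Imp_if_lentails, rule lentails_CM_Box lentails_CC_Box lentails_CM_Dia lentails_CC_Dia
    lentails_CW lentails_CFS)+

lemma lderiv_conjs: "(\<And>f. f \<in> set xs \<Longrightarrow> (x,f) \<in># I) \<Longrightarrow> lderiv E I (x, conjs xs)"
proof (induction xs rule: conjs.induct)
  case 1
  then show ?case by (simp add: lderiv_Top)
next
  case (2 f)
  then show ?case by (auto intro: lderiv_assm)
next
  case (3 f g zs)
  then show ?case by (auto intro: lderiv.AndR lderiv_assm)
qed

lemma lderiv_if_derives:
  assumes "finite A" "derives A \<phi>"
  shows "lderiv {#} (labelled 0 (mset_set A)) (0, \<phi>)"
proof -
  obtain xs where xs: "set xs \<subseteq> A" "hprov (Imp (conjs xs) \<phi>)"
    using assms(2) unfolding derives_def by blast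
  let ?I = "labelled 0 (mset_set A)"
  have "lderiv {#} (add_mset (0, conjs xs) ?I) (0, \<phi>)"
    using lderiv_ImpR_inv[OF lderiv_weaken[OF lderiv_if_hprov[OF xs(2)], of "{#}" ?I]] by simp
  moreover have "lderiv {#} ?I (0, conjs xs)"
    by (rule lderiv_conjs) (use xs(1) assms(1) in auto)
  ultimately show ?thesis using lderiv_cut by blast
qed

section \<open>Encoding nested sequents as labelled sequents\<close>

definition tree_labels :: "nat \<Rightarrow> 'a edges \<Rightarrow> 'a lforms \<Rightarrow> 'a lforms \<Rightarrow> nat set" where
  "tree_labels r E I Os = insert r (elabels E \<union> flabels I \<union> flabels Os)"

lemma flabels_labelled: "flabels (labelled r X) \<subseteq> {r}"
  by (auto simp: flabels_def)

lemma tree_labels_labelled[simp]: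
  "tree_labels r E (labelled r X + I) (labelled r Y + Os) = tree_labels r E I Os"
  using flabels_labelled[of r X] flabels_labelled[of r Y] by (auto simp: tree_labels_def)

lemma tree_labels_child:
  "tree_labels r (add_mset (r,e,y) (E + E')) (I + I') (Os + Os') =
    tree_labels r E I Os \<union> tree_labels y E' I' Os'"
  by (auto simp: tree_labels_def)

lemma root_in_tree_labels[simp]: "r \<in> tree_labels r E I Os"
  by (simp add: tree_labels_def)

text \<open>\<^term>\<open>represents r S E I Os\<close>: the labelled sequent with edges \<^term>\<open>E\<close>, inputs
  \<^term>\<open>I\<close> and outputs \<^term>\<open>Os\<close> encodes the nested sequent \<^term>\<open>S\<close> as a tree rooted at
  label \<^term>\<open>r\<close>, distinct nodes carrying distinct labels.\<close>

inductive represents :: "nat \<Rightarrow> 'a seq \<Rightarrow> 'a edges \<Rightarrow> 'a lforms \<Rightarrow> 'a lforms \<Rightarrow> bool" where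
  leaf: "represents r (Seq X Y {#}) {#} (labelled r X) (labelled r Y)"
| child: "represents r (Seq X Y Z) E I Os \<Longrightarrow> represents y N E' I' Os'
    \<Longrightarrow> tree_labels y E' I' Os' \<inter> tree_labels r E I Os = {}
    \<Longrightarrow> represents r (Seq X Y (add_mset (e,N) Z)) (add_mset (r,e,y) (E + E')) (I + I') (Os + Os')"

lemma represents_outs: "represents r S E I Os \<Longrightarrow> outs S = size Os"
  by (induction rule: represents.induct) auto

lemma represents_nested: "represents r S E I {#u#} \<Longrightarrow> nested S"
  using represents_outs by (fastforce simp: nested_def)

lemma represents_strip: "represents r S E I Os \<Longrightarrow> represents r (strip S) E I {#}"
proof (induction rule: represents.induct)
  case (leaf r X Y)
  then show ?case using represents.leaf[of r X "{#}"] by simp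
next
  case (child r X Y Z E I Os y N E' I' Os' e)
  have "represents r (Seq X {#} (add_mset (e, strip N) (image_mset (map_prod id strip) Z)))
      (add_mset (r,e,y) (E + E')) (I + I') ({#} + {#})"
    by (rule represents.child) (use child in \<open>auto simp: tree_labels_def\<close>)
  then show ?case by simp
qed

lemma represents_root:
  assumes "represents r (Seq X Y Z) E I Os"
  obtains I1 O1 where "I = labelled r X + I1" "Os = labelled r Y + O1"
    "r \<notin> flabels I1" "r \<notin> flabels O1"
    "\<And>X' Y'. represents r (Seq X' Y' Z) E (labelled r X' + I1) (labelled r Y' + O1)"
proof -
  have "\<exists>I1 O1. I = labelled r X + I1 \<and> Os = labelled r Y + O1
      \<and> r \<notin> flabels I1 \<and> r \<notin> flabels O1
      \<and> (\<forall>X' Y'. represents r (Seq X' Y' Z) E (labelled r X' + I1) (labelled r Y' + O1))"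
    using assms
  proof (induction r "Seq X Y Z" E I Os arbitrary: X Y Z rule: represents.induct)
    case (leaf r X Y)
    then show ?case by (auto intro: represents.leaf[of r, simplified])
  next
    case (child r X Y Z0 E I Os y N E' I' Os' e)
    then obtain I1 O1 where h: "I = labelled r X + I1" "Os = labelled r Y + O1"
      "r \<notin> flabels I1" "r \<notin> flabels O1"
      "\<And>X' Y'. represents r (Seq X' Y' Z0) E (labelled r X' + I1) (labelled r Y' + O1)"
      by blast
    have disj: "tree_labels y E' I' Os' \<inter> tree_labels r E I Os = {}" by fact
    then have "r \<notin> flabels I'" "r \<notin> flabels Os'" by (auto simp: tree_labels_def)
    moreover have "represents r (Seq X' Y' (add_mset (e,N) Z0)) (add_mset (r,e,y) (E + E'))
        (labelled r X' + (I1 + I')) (labelled r Y' + (O1 + Os'))" for X' Y'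
      using represents.child[OF h(5) \<open>represents y N E' I' Os'\<close>] disj h by (simp add: add.assoc)
    ultimately show ?case using h child.prems by (intro exI[of _ "I1 + I'"] exI[of _ "O1 + Os'"]) simp
  qed
  then show thesis using that by blast
qed

lemma represents_root_update:
  assumes "represents r (Seq X Y Z) E (labelled r X + I1) (labelled r Y + O1)"
  shows "represents r (Seq X' Y' Z) E (labelled r X' + I1) (labelled r Y' + O1)"
proof -
  obtain I1' O1' where "labelled r X + I1 = labelled r X + I1'"
    "labelled r Y + O1 = labelled r Y + O1'"
    "represents r (Seq X' Y' Z) E (labelled r X' + I1') (labelled r Y' + O1')"
    by (rule represents_root[OF assms]) blast
  then show ?thesis by simp
qed

lemma represents_split_child:
  assumes "represents r (Seq X Y Z) E I Os" "(r,e,z) \<in># E"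
  obtains N Z0 E0 I0 Os0 Ez Iz Osz where "Z = add_mset (e,N) Z0"
    "represents r (Seq X Y Z0) E0 I0 Os0" "represents z N Ez Iz Osz"
    "tree_labels z Ez Iz Osz \<inter> tree_labels r E0 I0 Os0 = {}"
    "E = add_mset (r,e,z) (E0 + Ez)" "I = I0 + Iz" "Os = Os0 + Osz"
proof -
  have "\<exists>N Z0 E0 I0 Os0 Ez Iz Osz. Z = add_mset (e,N) Z0
      \<and> represents r (Seq X Y Z0) E0 I0 Os0 \<and> represents z N Ez Iz Osz
      \<and> tree_labels z Ez Iz Osz \<inter> tree_labels r E0 I0 Os0 = {}
      \<and> E = add_mset (r,e,z) (E0 + Ez) \<and> I = I0 + Iz \<and> Os = Os0 + Osz"
    using assms
  proof (induction r "Seq X Y Z" E I Os arbitrary: Z rule: represents.induct)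
    case (child r Z1 E1 I1 Os1 y N1 E' I' Os' e')
    have disj: "tree_labels y E' I' Os' \<inter> tree_labels r E1 I1 Os1 = {}" by fact
    show ?case
    proof (cases "(e,z) = (e',y)")
      case True
      then show ?thesis using child disj by blast
    next
      case False
      have "(r,e,z) \<notin># E'"
        using disj elabels_mem[of r e z E'] by (auto simp: tree_labels_def)
      then have "(r,e,z) \<in># E1" using child.prems False by auto
      then obtain N Z0 E0 I0 Os0 Ez Iz Osz where h: "Z1 = add_mset (e,N) Z0"
        "represents r (Seq X Y Z0) E0 I0 Os0" "represents z N Ez Iz Osz"
        "tree_labels z Ez Iz Osz \<inter> tree_labels r E0 I0 Os0 = {}"
        "E1 = add_mset (r,e,z) (E0 + Ez)" "I1 = I0 + Iz" "Os1 = Os0 + Osz"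
        using child.hyps(2) by blast
      have "tree_labels r E0 I0 Os0 \<union> tree_labels z Ez Iz Osz \<subseteq> tree_labels r E1 I1 Os1"
        using h by (auto simp: tree_labels_def)
      then have "represents r (Seq X Y (add_mset (e',N1) Z0)) (add_mset (r,e',y) (E0 + E'))
          (I0 + I') (Os0 + Os')"
        and "tree_labels z Ez Iz Osz \<inter>
          tree_labels r (add_mset (r,e',y) (E0 + E')) (I0 + I') (Os0 + Os') = {}"
        using represents.child[OF h(2) \<open>represents y N1 E' I' Os'\<close>] disj h(4)
        unfolding tree_labels_child by blast+
      then show ?thesis
        using h child.prems
        by (intro exI[of _ N] exI[of _ "add_mset (e',N1) Z0"] exI[of _ "add_mset (r,e',y) (E0 + E')"]
            exI[of _ "I0 + I'"] exI[of _ "Os0 + Os'"] exI[of _ Ez] exI[of _ Iz] exI[of _ Osz])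
          (auto simp: ac_simps add_mset_commute)
    qed
  qed simp
  then show thesis using that by blast
qed

text \<open>\<^term>\<open>represents_ctx r G x Ec Ic Oc\<close>: the labelled material \<^term>\<open>Ec\<close>, \<^term>\<open>Ic\<close>,
  \<^term>\<open>Oc\<close> encodes the context \<^term>\<open>G\<close> rooted at \<^term>\<open>r\<close>, whose hole sits at label
  \<^term>\<open>x\<close>.\<close>

inductive represents_ctx :: "nat \<Rightarrow> 'a ctx \<Rightarrow> nat \<Rightarrow> 'a edges \<Rightarrow> 'a lforms \<Rightarrow> 'a lforms \<Rightarrow> bool" where
  hole: "represents_ctx r CHole r {#} {#} {#}"
| node: "represents r (Seq X Y Z) E I Os \<Longrightarrow> represents_ctx y G x Ec Ic Oc
    \<Longrightarrow> tree_labels y Ec Ic Oc \<inter> tree_labels r E I Os = {}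
    \<Longrightarrow> represents_ctx r (CNode X Y Z e G) x (add_mset (r,e,y) (E + Ec)) (I + Ic) (Os + Oc)"

lemma represents_ctx_hole_label:
  "represents_ctx r G x Ec Ic Oc \<Longrightarrow>
     x \<in> tree_labels r Ec Ic Oc \<and> x \<notin> flabels Ic \<and> x \<notin> flabels Oc \<and> (\<forall>e z. (x,e,z) \<notin># Ec)"
proof (induction rule: represents_ctx.induct)
  case (node r X Y Z E I Os y G x Ec Ic Oc e)
  then have "x \<notin> tree_labels r E I Os" by blast
  then show ?case using node.IH by (auto simp: tree_labels_def dest: elabels_mem)
qed simp

lemma represents_fill:
  "represents_ctx r G x Ec Ic Oc \<Longrightarrow> represents x N Eh Ih Oh
    \<Longrightarrow> tree_labels x Eh Ih Oh \<inter> tree_labels r Ec Ic Oc \<subseteq> {x}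
    \<Longrightarrow> represents r (fill G N) (Eh + Ec) (Ih + Ic) (Oh + Oc)"
proof (induction arbitrary: N Eh Ih Oh rule: represents_ctx.induct)
  case (node r X Y Z E I Os y G x Ec Ic Oc e)
  have "x \<in> tree_labels y Ec Ic Oc" using node.hyps(2) represents_ctx_hole_label by blast
  then have "tree_labels y (Eh + Ec) (Ih + Ic) (Oh + Oc) \<inter> tree_labels r E I Os = {}"
    using node.hyps(3) node.prems(2) unfolding tree_labels_child by (auto simp: tree_labels_def)
  moreover have "represents y (fill G N) (Eh + Ec) (Ih + Ic) (Oh + Oc)"
    using node.IH node.prems unfolding tree_labels_child by blast
  ultimately show ?case
    using represents.child[OF node.hyps(1), of y "fill G N" "Eh + Ec" "Ih + Ic" "Oh + Oc" e]
    by (simp add: ac_simps)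
qed simp

lemma represents_ctx_cstrip:
  "represents_ctx r G x Ec Ic Oc \<Longrightarrow> represents_ctx r (cstrip G) x Ec Ic {#}"
proof (induction rule: represents_ctx.induct)
  case (node r X Y Z E I Os y G x Ec Ic Oc e)
  have "tree_labels y Ec Ic {#} \<inter> tree_labels r E I {#} = {}"
    using node.hyps(3) by (auto simp: tree_labels_def)
  then show ?case
    using represents_ctx.node[OF represents_strip[OF node.hyps(1), simplified] node.IH] by simp
qed (simp add: represents_ctx.hole)

lemma represents_ctx_add_child:
  assumes "represents_ctx r (CNode X Y Z e1 G) x Ec Ic Oc" "represents y N E' I' Os'"
    and "tree_labels y E' I' Os' \<inter> tree_labels r Ec Ic Oc = {}"
  shows "represents_ctx r (CNode X Y (add_mset (e,N) Z) e1 G) x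
           (add_mset (r,e,y) (Ec + E')) (Ic + I') (Oc + Os')"
  using assms(1)
proof cases
  case (node E I Os y1 Ec1 Ic1 Oc1)
  have "tree_labels r E I Os \<subseteq> tree_labels r Ec Ic Oc" "tree_labels y1 Ec1 Ic1 Oc1 \<subseteq> tree_labels r Ec Ic Oc"
    using node by (auto simp: tree_labels_def)
  then have "represents r (Seq X Y (add_mset (e,N) Z)) (add_mset (r,e,y) (E + E')) (I + I') (Os + Os')"
    and "tree_labels y1 Ec1 Ic1 Oc1 \<inter> tree_labels r (add_mset (r,e,y) (E + E')) (I + I') (Os + Os') = {}"
    using represents.child[OF node(4) assms(2)] assms(3) node(6) unfolding tree_labels_child by blast+
  from represents_ctx.node[OF this(1) node(5) this(2), of e1] show ?thesis
    using node by (simp add: ac_simps add_mset_commute)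
qed

lemma tree_labels_mono: "tree_labels r E I Os \<subseteq> tree_labels r (E' + E) (I' + I) (Os' + Os)"
  by (auto simp: tree_labels_def)

lemma tree_labels_subtree:
  "x \<in> tree_labels r (E + E') (I + I') (Os + Os') \<Longrightarrow>
     tree_labels x E I Os \<subseteq> tree_labels r (E + E') (I + I') (Os + Os')"
  by (auto simp: tree_labels_def)

lemma represents_locate:
  assumes "represents r S E I Os" "x \<in> tree_labels r E I Os"
  obtains G N Eh Ih Oh Ec Ic Oc where "S = fill G N" "represents x N Eh Ih Oh"
    "represents_ctx r G x Ec Ic Oc" "E = Eh + Ec" "I = Ih + Ic" "Os = Oh + Oc"
    "tree_labels x Eh Ih Oh \<inter> tree_labels r Ec Ic Oc \<subseteq> {x}"
proof -
  have "\<exists>G N Eh Ih Oh Ec Ic Oc. S = fill G N \<and> represents x N Eh Ih Oh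
      \<and> represents_ctx r G x Ec Ic Oc \<and> E = Eh + Ec \<and> I = Ih + Ic \<and> Os = Oh + Oc
      \<and> tree_labels x Eh Ih Oh \<inter> tree_labels r Ec Ic Oc \<subseteq> {x}"
    using assms
  proof (induction rule: represents.induct)
    case (leaf r X Y)
    then have "x = r" using flabels_labelled[of r X] flabels_labelled[of r Y] by (auto simp: tree_labels_def)
    then show ?case
      using represents.leaf represents_ctx.hole by (intro exI[of _ CHole]) (fastforce simp: tree_labels_def)
  next
    case (child r X Y Z E I Os y N E' I' Os' e)
    have S: "represents r (Seq X Y (add_mset (e,N) Z)) (add_mset (r,e,y) (E + E')) (I + I') (Os + Os')"
      using represents.child[OF child.hyps] .
    have disj: "tree_labels y E' I' Os' \<inter> tree_labels r E I Os = {}" by (rule child.hyps(3))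
    consider "x = r" | "x \<in> tree_labels y E' I' Os'" | "x \<noteq> r" "x \<in> tree_labels r E I Os"
      using child.prems unfolding tree_labels_child by blast
    then show ?case
    proof cases
      case 1
      then show ?thesis
        using S represents_ctx.hole by (intro exI[of _ CHole]) (fastforce simp: tree_labels_def)
    next
      case 2
      then obtain G N0 Eh Ih Oh Ec Ic Oc where h: "N = fill G N0" "represents x N0 Eh Ih Oh"
        "represents_ctx y G x Ec Ic Oc" "E' = Eh + Ec" "I' = Ih + Ic" "Os' = Oh + Oc"
        "tree_labels x Eh Ih Oh \<inter> tree_labels y Ec Ic Oc \<subseteq> {x}"
        using child.IH(2) by blast
      have "tree_labels x Eh Ih Oh \<union> tree_labels y Ec Ic Oc \<subseteq> tree_labels y E' I' Os'"
        using 2 h(4-6) tree_labels_subtree tree_labels_mono by blast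
      then have "represents_ctx r (CNode X Y Z e G) x (add_mset (r,e,y) (E + Ec)) (I + Ic) (Os + Oc)"
        and "tree_labels x Eh Ih Oh \<inter> tree_labels r (add_mset (r,e,y) (E + Ec)) (I + Ic) (Os + Oc) \<subseteq> {x}"
        using represents_ctx.node[OF child.hyps(1) h(3)] disj h(7) unfolding tree_labels_child by blast+
      then show ?thesis
        using h by (intro exI[of _ "CNode X Y Z e G"] exI[of _ N0] exI[of _ Eh] exI[of _ Ih] exI[of _ Oh]
            exI[of _ "add_mset (r,e,y) (E + Ec)"] exI[of _ "I + Ic"] exI[of _ "Os + Oc"])
          (auto simp: ac_simps)
    next
      case 3
      then obtain G N0 Eh Ih Oh Ec Ic Oc where h: "Seq X Y Z = fill G N0" "represents x N0 Eh Ih Oh"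
        "represents_ctx r G x Ec Ic Oc" "E = Eh + Ec" "I = Ih + Ic" "Os = Oh + Oc"
        "tree_labels x Eh Ih Oh \<inter> tree_labels r Ec Ic Oc \<subseteq> {x}"
        using child.IH(1) by blast
      obtain Z1 e1 G' where G: "G = CNode X Y Z1 e1 G'" "Z = add_mset (e1, fill G' N0) Z1"
        using h(1,3) 3(1) by (cases G) (auto elim: represents_ctx.cases)
      have "tree_labels x Eh Ih Oh \<union> tree_labels r Ec Ic Oc \<subseteq> tree_labels r E I Os"
        using 3(2) h(4-6) tree_labels_subtree tree_labels_mono by blast
      then have "represents_ctx r (CNode X Y (add_mset (e,N) Z1) e1 G') x
          (add_mset (r,e,y) (Ec + E')) (Ic + I') (Oc + Os')"
        and "tree_labels x Eh Ih Oh \<inter> tree_labels r (add_mset (r,e,y) (Ec + E')) (Ic + I') (Oc + Os') \<subseteq> {x}"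
        using represents_ctx_add_child[OF h(3)[unfolded G(1)] child.hyps(2)] disj h(7)
        unfolding tree_labels_child by blast+
      then show ?thesis
        using h G by (intro exI[of _ "CNode X Y (add_mset (e,N) Z1) e1 G'"] exI[of _ N0] exI[of _ Eh]
            exI[of _ Ih] exI[of _ Oh] exI[of _ "add_mset (r,e,y) (Ec + E')"] exI[of _ "Ic + I'"]
            exI[of _ "Oc + Os'"]) (auto simp: ac_simps add_mset_commute)
    qed
  qed
  then show thesis using that by blast
qed

lemma represents_focus:
  assumes "represents r S E I Os" "x \<in> tree_labels r E I Os"
  obtains G X Y Z Ec Ic Oc Eh I1 O1 where "S = fill G (Seq X Y Z)" "represents_ctx r G x Ec Ic Oc"
    "represents x (Seq X Y Z) Eh (labelled x X + I1) (labelled x Y + O1)"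
    "\<And>X' Y'. represents x (Seq X' Y' Z) Eh (labelled x X' + I1) (labelled x Y' + O1)"
    "E = Eh + Ec" "I = labelled x X + (I1 + Ic)" "Os = labelled x Y + (O1 + Oc)"
    "x \<notin> flabels (I1 + Ic)" "x \<notin> flabels (O1 + Oc)"
    "tree_labels x Eh I1 O1 \<inter> tree_labels r Ec Ic Oc \<subseteq> {x}"
proof -
  obtain G N Eh Ih Oh Ec Ic Oc where h: "S = fill G N" "represents x N Eh Ih Oh"
    "represents_ctx r G x Ec Ic Oc" "E = Eh + Ec" "I = Ih + Ic" "Os = Oh + Oc"
    "tree_labels x Eh Ih Oh \<inter> tree_labels r Ec Ic Oc \<subseteq> {x}"
    using represents_locate[OF assms] by blast
  obtain X Y Z where N: "N = Seq X Y Z" by (cases N)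
  obtain I1 O1 where root: "Ih = labelled x X + I1" "Oh = labelled x Y + O1"
    "x \<notin> flabels I1" "x \<notin> flabels O1"
    "\<And>X' Y'. represents x (Seq X' Y' Z) Eh (labelled x X' + I1) (labelled x Y' + O1)"
    using represents_root[OF h(2)[unfolded N]] by blast
  have "tree_labels x Eh I1 O1 \<inter> tree_labels r Ec Ic Oc \<subseteq> {x}"
    using h(7) unfolding root(1,2) by simp
  moreover have "x \<notin> flabels Ic" "x \<notin> flabels Oc"
    using represents_ctx_hole_label[OF h(3)] by auto
  ultimately show thesis
    using that[OF h(1)[unfolded N] h(3) h(2)[unfolded N root(1,2)] root(5) h(4)] h(5,6) root(1-4)
    by (simp add: add.assoc)
qed

lemma input_at_label:
  assumes "add_mset (x,f) K = labelled x X + J" "x \<notin> flabels J"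
  obtains X0 where "X = add_mset f X0" "K = labelled x X0 + J"
proof -
  have "(x,f) \<in># labelled x X + J" unfolding assms(1)[symmetric] by simp
  then have "f \<in># X" using assms(2) by (force simp: flabels_def)
  then obtain X0 where "X = add_mset f X0" by (metis insert_DiffM)
  then show thesis using that assms(1) by simp
qed

lemma output_at_label:
  assumes "{#(x,f)#} = labelled x Y + P" "x \<notin> flabels P"
  shows "Y = {#f#}" "P = {#}"
proof -
  have "labelled x Y = {#(x,f)#}" "P = {#}"
    using assms by (auto simp: eq_commute[of "{#_#}"] union_is_single flabels_def)
  then show "Y = {#f#}" "P = {#}" by (auto dest: msed_map_invR)
qed

lemma represents_strip_node:
  assumes "represents x (Seq X Y Z) Eh (labelled x X + I1) (labelled x Y + O1)"
  shows "represents x (Seq X' {#a#} (image_mset (map_prod id strip) Z)) Eh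
    (labelled x X' + I1) {#(x,a)#}"
proof -
  have "represents x (Seq X {#} (image_mset (map_prod id strip) Z)) Eh
      (labelled x X + I1) (labelled x {#} + {#})"
    using represents_strip[OF assms] by simp
  from represents_root_update[OF this, of X' "{#a#}"] show ?thesis by simp
qed

lemma represents_add_leaf:
  assumes "represents x (Seq X Y Z) Eh (labelled x X + I1) (labelled x Y + O1)"
    and "y \<notin> tree_labels x Eh I1 O1"
  shows "represents x (Seq X' Y' (add_mset (a, Seq Xn Yn {#}) Z)) (add_mset (x,a,y) Eh)
    (labelled x X' + (labelled y Xn + I1)) (labelled x Y' + (labelled y Yn + O1))"
proof -
  have "tree_labels y {#} (labelled y Xn) (labelled y Yn) = {y}"
    using tree_labels_labelled[of y "{#}" Xn "{#}" Yn "{#}"] by (simp add: tree_labels_def)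
  with assms(2) have "represents x (Seq X' Y' (add_mset (a, Seq Xn Yn {#}) Z)) (add_mset (x,a,y) (Eh + {#}))
      (labelled x X' + I1 + labelled y Xn) (labelled x Y' + O1 + labelled y Yn)"
    by (intro represents.child[OF represents_root_update[OF assms(1)] represents.leaf]) auto
  then show ?thesis by (simp add: ac_simps)
qed

lemma represents_focus_node:
  assumes "represents r S E I Os" "x \<in> tree_labels r E I Os"
  obtains G X Y Z J P where "S = fill G (Seq X Y Z)"
    "I = labelled x X + J" "Os = labelled x Y + P" "x \<notin> flabels J" "x \<notin> flabels P"
    "\<And>X' Y'. represents r (fill G (Seq X' Y' Z)) E (labelled x X' + J) (labelled x Y' + P)"
    "\<And>X' a. represents r (fill (cstrip G) (Seq X' {#a#} (image_mset (map_prod id strip) Z))) E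
        (labelled x X' + J) {#(x,a)#}"
    "\<And>y a Xn Yn X' Y'. y \<notin> tree_labels r E I Os \<Longrightarrow>
      represents r (fill G (Seq X' Y' (add_mset (a, Seq Xn Yn {#}) Z))) (add_mset (x,a,y) E)
        (labelled x X' + (labelled y Xn + J))
        (labelled x Y' + (labelled y Yn + P))"
proof -
  obtain G X Y Z Ec Ic Oc Eh I1 O1 where h: "S = fill G (Seq X Y Z)" "represents_ctx r G x Ec Ic Oc"
    "represents x (Seq X Y Z) Eh (labelled x X + I1) (labelled x Y + O1)"
    "E = Eh + Ec" "I = labelled x X + (I1 + Ic)" "Os = labelled x Y + (O1 + Oc)"
    "x \<notin> flabels (I1 + Ic)" "x \<notin> flabels (O1 + Oc)"
    "tree_labels x Eh I1 O1 \<inter> tree_labels r Ec Ic Oc \<subseteq> {x}"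
    by (rule represents_focus[OF assms]) (rule that; assumption)
  have labels: "tree_labels x Eh I1 O1 \<union> tree_labels r Ec Ic Oc \<subseteq> tree_labels r E I Os"
    using assms(2) h(4-6) by (auto simp: tree_labels_def)
  have upd: "represents r (fill G (Seq X' Y' Z)) (Eh + Ec) (labelled x X' + I1 + Ic)
      (labelled x Y' + O1 + Oc)" for X' Y'
    by (rule represents_fill[OF h(2) represents_root_update[OF h(3)]]) (use h(9) in simp)
  have str: "represents r (fill (cstrip G) (Seq X' {#a#} (image_mset (map_prod id strip) Z))) (Eh + Ec)
      (labelled x X' + I1 + Ic) ({#(x,a)#} + {#})" for X' a
    by (rule represents_fill[OF represents_ctx_cstrip[OF h(2)] represents_strip_node[OF h(3)]])
      (use h(9) in \<open>auto simp: tree_labels_def flabels_def\<close>)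
  have new: "represents r (fill G (Seq X' Y' (add_mset (a, Seq Xn Yn {#}) Z))) (add_mset (x,a,y) Eh + Ec)
      (labelled x X' + (labelled y Xn + I1) + Ic)
      (labelled x Y' + (labelled y Yn + O1) + Oc)"
    if y: "y \<notin> tree_labels r E I Os" for y a Xn Yn X' Y'
  proof (rule represents_fill[OF h(2) represents_add_leaf[OF h(3)]])
    show "y \<notin> tree_labels x Eh I1 O1" using y labels by blast
    have "tree_labels x (add_mset (x,a,y) Eh) (labelled x X' + (labelled y Xn + I1))
        (labelled x Y' + (labelled y Yn + O1)) \<subseteq> insert y (tree_labels x Eh I1 O1)"
      using flabels_labelled[of x X'] flabels_labelled[of x Y']
        flabels_labelled[of y Xn] flabels_labelled[of y Yn]
      unfolding tree_labels_def by auto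
    then show "tree_labels x (add_mset (x,a,y) Eh) (labelled x X' + (labelled y Xn + I1))
        (labelled x Y' + (labelled y Yn + O1)) \<inter> tree_labels r Ec Ic Oc \<subseteq> {x}"
      using h(9) y labels by blast
  qed
  show thesis
  proof (rule that)
    show "S = fill G (Seq X Y Z)" "I = labelled x X + (I1 + Ic)"
      "Os = labelled x Y + (O1 + Oc)"
      by (fact h(1,5,6))+
  qed (use upd str new h(4,7,8) in \<open>simp_all add: ac_simps\<close>)
qed

lemma represents_focus_input:
  assumes "represents r S E (add_mset (x,f) K) Os"
  obtains G X Y Z J P where "S = fill G (Seq (add_mset f X) Y Z)"
    "K = labelled x X + J" "Os = labelled x Y + P" "x \<notin> flabels P"
    "\<And>X' Y'. represents r (fill G (Seq X' Y' Z)) E (labelled x X' + J) (labelled x Y' + P)"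
    "\<And>X' a. represents r (fill (cstrip G) (Seq X' {#a#} (image_mset (map_prod id strip) Z))) E
        (labelled x X' + J) {#(x,a)#}"
    "\<And>y a Xn Yn X' Y'. y \<notin> tree_labels r E (add_mset (x,f) K) Os \<Longrightarrow>
      represents r (fill G (Seq X' Y' (add_mset (a, Seq Xn Yn {#}) Z))) (add_mset (x,a,y) E)
        (labelled x X' + (labelled y Xn + J))
        (labelled x Y' + (labelled y Yn + P))"
proof -
  have "x \<in> tree_labels r E (add_mset (x,f) K) Os" by (simp add: tree_labels_def)
  then obtain G X Y Z J P where h: "S = fill G (Seq X Y Z)"
    "add_mset (x,f) K = labelled x X + J" "Os = labelled x Y + P" "x \<notin> flabels J"
    "x \<notin> flabels P"
    "\<And>X' Y'. represents r (fill G (Seq X' Y' Z)) E (labelled x X' + J) (labelled x Y' + P)"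
    "\<And>X' a. represents r (fill (cstrip G) (Seq X' {#a#} (image_mset (map_prod id strip) Z))) E
        (labelled x X' + J) {#(x,a)#}"
    "\<And>y a Xn Yn X' Y'. y \<notin> tree_labels r E (add_mset (x,f) K) Os \<Longrightarrow>
      represents r (fill G (Seq X' Y' (add_mset (a, Seq Xn Yn {#}) Z))) (add_mset (x,a,y) E)
        (labelled x X' + (labelled y Xn + J))
        (labelled x Y' + (labelled y Yn + P))"
    by (rule represents_focus_node[OF assms]) (rule that; assumption)
  obtain X0 where "X = add_mset f X0" "K = labelled x X0 + J"
    using h(2,4) by (rule input_at_label)
  then show thesis using that h(1,3,5-8) by simp
qed

lemma represents_focus_output:
  assumes "represents r S E I {#(x,f)#}"
  obtains G X Z J where "S = fill G (Seq X {#f#} Z)" "I = labelled x X + J"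
    "\<And>X' Y'. represents r (fill G (Seq X' Y' Z)) E (labelled x X' + J) (labelled x Y')"
    "\<And>y a Xn Yn X' Y'. y \<notin> tree_labels r E I {#(x,f)#} \<Longrightarrow>
      represents r (fill G (Seq X' Y' (add_mset (a, Seq Xn Yn {#}) Z))) (add_mset (x,a,y) E)
        (labelled x X' + (labelled y Xn + J))
        (labelled x Y' + labelled y Yn)"
proof -
  have "x \<in> tree_labels r E I {#(x,f)#}" by (simp add: tree_labels_def)
  then obtain G X Y Z J P where h: "S = fill G (Seq X Y Z)"
    "I = labelled x X + J" "{#(x,f)#} = labelled x Y + P" "x \<notin> flabels P"
    "\<And>X' Y'. represents r (fill G (Seq X' Y' Z)) E (labelled x X' + J) (labelled x Y' + P)"
    "\<And>y a Xn Yn X' Y'. y \<notin> tree_labels r E I {#(x,f)#} \<Longrightarrow>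
      represents r (fill G (Seq X' Y' (add_mset (a, Seq Xn Yn {#}) Z))) (add_mset (x,a,y) E)
        (labelled x X' + (labelled y Xn + J))
        (labelled x Y' + (labelled y Yn + P))"
    by (rule represents_focus_node[OF assms]) (rule that; assumption)
  then have "Y = {#f#}" "P = {#}" using output_at_label by blast+
  then show thesis using that h(1,2,5,6) by simp
qed

lemma represents_child_update:
  assumes "represents x (Seq X Y Z) Eh (labelled x X + I1) (labelled x Y + O1)"
    and "(x,e,z) \<in># Eh"
  obtains Z0 Xz Yz Zz J P where "Z = add_mset (e, Seq Xz Yz Zz) Z0"
    "I1 = labelled z Xz + J" "O1 = labelled z Yz + P"
    "\<And>X' Y' Xz' Yz'. represents x (Seq X' Y' (add_mset (e, Seq Xz' Yz' Zz) Z0)) Eh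
        (labelled x X' + (labelled z Xz' + J))
        (labelled x Y' + (labelled z Yz' + P))"
proof -
  obtain N Z0 E0 I0 O0 Ez Iz Oz where c: "Z = add_mset (e,N) Z0"
    "represents x (Seq X Y Z0) E0 I0 O0" "represents z N Ez Iz Oz"
    "tree_labels z Ez Iz Oz \<inter> tree_labels x E0 I0 O0 = {}"
    "Eh = add_mset (x,e,z) (E0 + Ez)" "labelled x X + I1 = I0 + Iz"
    "labelled x Y + O1 = O0 + Oz"
    by (rule represents_split_child[OF assms]) (rule that; assumption)
  obtain Xz Yz Zz where N: "N = Seq Xz Yz Zz" by (cases N)
  obtain Iz1 Oz1 where z: "Iz = labelled z Xz + Iz1" "Oz = labelled z Yz + Oz1"
    "\<And>X' Y'. represents z (Seq X' Y' Zz) Ez (labelled z X' + Iz1) (labelled z Y' + Oz1)"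
    using represents_root[OF c(3)[unfolded N]] by blast
  obtain I01 O01 where x: "I0 = labelled x X + I01" "O0 = labelled x Y + O01"
    "\<And>X' Y'. represents x (Seq X' Y' Z0) E0 (labelled x X' + I01) (labelled x Y' + O01)"
    using represents_root[OF c(2)] by blast
  have "tree_labels z Ez Iz1 Oz1 \<inter> tree_labels x E0 I01 O01 = {}"
    using c(4) unfolding z(1,2) x(1,2) by simp
  then have "represents x (Seq X' Y' (add_mset (e, Seq Xz' Yz' Zz) Z0)) (add_mset (x,e,z) (E0 + Ez))
      (labelled x X' + I01 + (labelled z Xz' + Iz1))
      (labelled x Y' + O01 + (labelled z Yz' + Oz1))" for X' Y' Xz' Yz'
    by (intro represents.child[OF x(3)[of X' Y'] z(3)[of Xz' Yz']]) simp
  then have "represents x (Seq X' Y' (add_mset (e, Seq Xz' Yz' Zz) Z0)) Eh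
      (labelled x X' + (labelled z Xz' + (I01 + Iz1)))
      (labelled x Y' + (labelled z Yz' + (O01 + Oz1)))" for X' Y' Xz' Yz'
    using c(5) by (simp add: ac_simps)
  moreover have "I1 = labelled z Xz + (I01 + Iz1)" "O1 = labelled z Yz + (O01 + Oz1)"
    using c(6,7) x(1,2) z(1,2) by (simp_all add: ac_simps)
  ultimately show thesis using that c(1) N by blast
qed

lemma represents_focus_edge:
  assumes "represents r S E I Os" "(x,e,z) \<in># E"
  obtains G X Y Z Xz Yz Zz J P where "S = fill G (Seq X Y (add_mset (e, Seq Xz Yz Zz) Z))"
    "I = labelled x X + (labelled z Xz + J)"
    "Os = labelled x Y + (labelled z Yz + P)"
    "x \<notin> flabels (labelled z Xz + J)" "x \<notin> flabels (labelled z Yz + P)"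
    "\<And>X' Y' Xz' Yz'. represents r (fill G (Seq X' Y' (add_mset (e, Seq Xz' Yz' Zz) Z))) E
        (labelled x X' + (labelled z Xz' + J))
        (labelled x Y' + (labelled z Yz' + P))"
proof -
  have "x \<in> tree_labels r E I Os" using elabels_mem[OF assms(2)] by (simp add: tree_labels_def)
  then obtain G X Y Z Ec Ic Oc Eh I1 O1 where h: "S = fill G (Seq X Y Z)" "represents_ctx r G x Ec Ic Oc"
    "represents x (Seq X Y Z) Eh (labelled x X + I1) (labelled x Y + O1)"
    "E = Eh + Ec" "I = labelled x X + (I1 + Ic)" "Os = labelled x Y + (O1 + Oc)"
    "x \<notin> flabels (I1 + Ic)" "x \<notin> flabels (O1 + Oc)"
    "tree_labels x Eh I1 O1 \<inter> tree_labels r Ec Ic Oc \<subseteq> {x}"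
    by (rule represents_focus[OF assms(1)]) (rule that; assumption)
  have "(x,e,z) \<in># Eh" using assms(2) h(4) represents_ctx_hole_label[OF h(2)] by auto
  then obtain Z0 Xz Yz Zz J P where c: "Z = add_mset (e, Seq Xz Yz Zz) Z0"
    "I1 = labelled z Xz + J" "O1 = labelled z Yz + P"
    "\<And>X' Y' Xz' Yz'. represents x (Seq X' Y' (add_mset (e, Seq Xz' Yz' Zz) Z0)) Eh
        (labelled x X' + (labelled z Xz' + J))
        (labelled x Y' + (labelled z Yz' + P))"
    by (rule represents_child_update[OF h(3)]) (rule that; assumption)
  have "represents r (fill G (Seq X' Y' (add_mset (e, Seq Xz' Yz' Zz) Z0))) (Eh + Ec)
      (labelled x X' + (labelled z Xz' + J) + Ic)
      (labelled x Y' + (labelled z Yz' + P) + Oc)" for X' Y' Xz' Yz'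
  proof (rule represents_fill[OF h(2) c(4)])
    have "z \<in> elabels Eh" using \<open>(x,e,z) \<in># Eh\<close> elabels_mem by blast
    then have "tree_labels x Eh (labelled x X' + (labelled z Xz' + J))
        (labelled x Y' + (labelled z Yz' + P)) \<subseteq> tree_labels x Eh I1 O1"
      using flabels_labelled[of x X'] flabels_labelled[of x Y']
        flabels_labelled[of z Xz'] flabels_labelled[of z Yz']
      unfolding c(2,3) tree_labels_def by auto
    then show "tree_labels x Eh (labelled x X' + (labelled z Xz' + J))
        (labelled x Y' + (labelled z Yz' + P)) \<inter> tree_labels r Ec Ic Oc \<subseteq> {x}"
      using h(9) by blast
  qed
  note fill = this
  show thesis
  proof (rule that)
    show "S = fill G (Seq X Y (add_mset (e, Seq Xz Yz Zz) Z0))" using h(1) c(1) by simp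
    show "I = labelled x X + (labelled z Xz + (J + Ic))" using h(5) c(2) by (simp add: ac_simps)
    show "Os = labelled x Y + (labelled z Yz + (P + Oc))" using h(6) c(3) by (simp add: ac_simps)
  qed (use fill h(4,7,8) c(2,3) in \<open>simp_all add: ac_simps\<close>)
qed

section \<open>From labelled derivations to \<open>N.IntCK\<close> derivations\<close>

lemma represents_io: "represents 0 (io a e) {#} {#(0,a)#} {#(0,e)#}"
  unfolding io_def using represents.leaf[of 0 "{#a#}" "{#e#}"] by simp

lemma ex_fresh_tree_label: "finite F \<Longrightarrow> \<exists>y. y \<notin> F \<and> y \<notin> tree_labels r E I Os"
  using ex_fresh_label[of "F \<union> tree_labels r E I Os"] by (auto simp: tree_labels_def)

lemma nderiv_if_represented: "lderiv E I u \<Longrightarrow> represents r S E I {#u#} \<Longrightarrow> nderiv S"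
proof (induction arbitrary: r S rule: lderiv.induct)
  case (Init E x p K)
  obtain G X Y Z P where "S = fill G (Seq (add_mset (Atom p) X) Y Z)"
    "{#(x, Atom p)#} = labelled x Y + P" "x \<notin> flabels P"
    by (rule represents_focus_input[OF Init.prems]) (rule that; assumption)
  then show ?case
    using nderiv.init[of G X p "{#}" Z] represents_nested[OF Init.prems] output_at_label by auto
next
  case (BotL E x K u)
  obtain G X Y Z where "S = fill G (Seq (add_mset Bot X) Y Z)"
    by (rule represents_focus_input[OF BotL.prems]) (rule that; assumption)
  then show ?case using nderiv.botL[of G X Y Z] represents_nested[OF BotL.prems] by simp
next
  case (AndL E x a b K u)
  obtain G X Y Z J P where S: "S = fill G (Seq (add_mset (And a b) X) Y Z)"
    and K: "K = labelled x X + J" and O: "{#u#} = labelled x Y + P"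
    and upd: "\<And>X' Y'. represents r (fill G (Seq X' Y' Z)) E (labelled x X' + J) (labelled x Y' + P)"
    by (rule represents_focus_input[OF AndL.prems]) (rule that; assumption)
  have rep: "represents r (fill G (Seq (add_mset a (add_mset b X)) Y Z)) E
      (add_mset (x,a) (add_mset (x,b) K)) {#u#}"
    using upd[of "add_mset a (add_mset b X)" Y] K O by simp
  show ?case
    using nderiv.andL[of G X a b Y Z] AndL.IH[OF rep]
      represents_nested[OF rep] represents_nested[OF AndL.prems] S by simp
next
  case (AndR E I x a b)
  obtain G X Z J where S: "S = fill G (Seq X {#And a b#} Z)" and I: "I = labelled x X + J"
    and upd: "\<And>X' Y'. represents r (fill G (Seq X' Y' Z)) E (labelled x X' + J) (labelled x Y')"
    by (rule represents_focus_output[OF AndR.prems]) (rule that; assumption)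
  have rep: "represents r (fill G (Seq X {#c#} Z)) E I {#(x,c)#}" for c using upd[of X "{#c#}"] I by simp
  show ?case
    using nderiv.andR[of G X "{#}" a b Z] AndR.IH(1)[OF rep] AndR.IH(2)[OF rep]
      represents_nested[OF rep] represents_nested[OF AndR.prems] S by simp
next
  case (OrL E x a K u b)
  obtain G X Y Z J P where S: "S = fill G (Seq (add_mset (Or a b) X) Y Z)"
    and K: "K = labelled x X + J" and O: "{#u#} = labelled x Y + P"
    and upd: "\<And>X' Y'. represents r (fill G (Seq X' Y' Z)) E (labelled x X' + J) (labelled x Y' + P)"
    by (rule represents_focus_input[OF OrL.prems]) (rule that; assumption)
  have rep: "represents r (fill G (Seq (add_mset c X) Y Z)) E (add_mset (x,c) K) {#u#}" for c
    using upd[of "add_mset c X" Y] K O by simp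
  show ?case
    using nderiv.orL[of G X a b Y Z] OrL.IH(1)[OF rep] OrL.IH(2)[OF rep]
      represents_nested[OF rep] represents_nested[OF OrL.prems] S by simp
next
  case (OrR1 E I x a b)
  obtain G X Z J where S: "S = fill G (Seq X {#Or a b#} Z)" and I: "I = labelled x X + J"
    and upd: "\<And>X' Y'. represents r (fill G (Seq X' Y' Z)) E (labelled x X' + J) (labelled x Y')"
    by (rule represents_focus_output[OF OrR1.prems]) (rule that; assumption)
  have rep: "represents r (fill G (Seq X {#a#} Z)) E I {#(x,a)#}" using upd[of X "{#a#}"] I by simp
  show ?case
    using nderiv.orR1[of G X "{#}" a b Z] OrR1.IH[OF rep]
      represents_nested[OF rep] represents_nested[OF OrR1.prems] S by simp
next
  case (OrR2 E I x b a)
  obtain G X Z J where S: "S = fill G (Seq X {#Or a b#} Z)" and I: "I = labelled x X + J"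
    and upd: "\<And>X' Y'. represents r (fill G (Seq X' Y' Z)) E (labelled x X' + J) (labelled x Y')"
    by (rule represents_focus_output[OF OrR2.prems]) (rule that; assumption)
  have rep: "represents r (fill G (Seq X {#b#} Z)) E I {#(x,b)#}" using upd[of X "{#b#}"] I by simp
  show ?case
    using nderiv.orR2[of G X "{#}" a b Z] OrR2.IH[OF rep]
      represents_nested[OF rep] represents_nested[OF OrR2.prems] S by simp
next
  case (ImpL E x a b K u)
  obtain G X Y Z J P where S: "S = fill G (Seq (add_mset (Imp a b) X) Y Z)"
    and K: "K = labelled x X + J" and O: "{#u#} = labelled x Y + P"
    and upd: "\<And>X' Y'. represents r (fill G (Seq X' Y' Z)) E (labelled x X' + J) (labelled x Y' + P)"
    and str: "\<And>X' c. represents r (fill (cstrip G) (Seq X' {#c#} (image_mset (map_prod id strip) Z))) E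
        (labelled x X' + J) {#(x,c)#}"
    by (rule represents_focus_input[OF ImpL.prems]) (rule that; assumption)
  have rep1: "represents r
      (fill (cstrip G) (Seq (add_mset (Imp a b) X) {#a#} (image_mset (map_prod id strip) Z))) E
      (add_mset (x, Imp a b) K) {#(x,a)#}"
    and rep2: "represents r (fill G (Seq (add_mset b X) Y Z)) E (add_mset (x,b) K) {#u#}"
    using str[of "add_mset (Imp a b) X" a] upd[of "add_mset b X" Y] K O by simp_all
  show ?case
    using nderiv.impL[of G X a b Y Z] ImpL.IH(1)[OF rep1] ImpL.IH(2)[OF rep2]
      represents_nested[OF rep1] represents_nested[OF rep2] represents_nested[OF ImpL.prems] S by simp
next
  case (ImpR E x a I b)
  obtain G X Z J where S: "S = fill G (Seq X {#Imp a b#} Z)" and I: "I = labelled x X + J"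
    and upd: "\<And>X' Y'. represents r (fill G (Seq X' Y' Z)) E (labelled x X' + J) (labelled x Y')"
    by (rule represents_focus_output[OF ImpR.prems]) (rule that; assumption)
  have rep: "represents r (fill G (Seq (add_mset a X) {#b#} Z)) E (add_mset (x,a) I) {#(x,b)#}"
    using upd[of "add_mset a X" "{#b#}"] I by simp
  show ?case
    using nderiv.impR[of G X "{#}" a b Z] ImpR.IH[OF rep]
      represents_nested[OF rep] represents_nested[OF ImpR.prems] S by simp
next
  case (BoxL x e z E a b K u)
  obtain G X Y Z Xz Yz Zz J P where S: "S = fill G (Seq X Y (add_mset (e, Seq Xz Yz Zz) Z))"
    and I: "add_mset (x, BoxArr a b) K = labelled x X + (labelled z Xz + J)"
      "x \<notin> flabels (labelled z Xz + J)"
    and O: "{#u#} = labelled x Y + (labelled z Yz + P)"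
    and upd: "\<And>X' Y' Xz' Yz'. represents r (fill G (Seq X' Y' (add_mset (e, Seq Xz' Yz' Zz) Z))) E
        (labelled x X' + (labelled z Xz' + J))
        (labelled x Y' + (labelled z Yz' + P))"
    by (rule represents_focus_edge[OF BoxL.prems BoxL.hyps(1)]) (rule that; assumption)
  obtain X0 where X: "X = add_mset (BoxArr a b) X0" using I by (rule input_at_label)
  have rep: "represents r (fill G (Seq X Y (add_mset (e, Seq (add_mset b Xz) Yz Zz) Z))) E
      (add_mset (z,b) (add_mset (x, BoxArr a b) K)) {#u#}"
    using upd[of X Y "add_mset b Xz" Yz] I O by simp
  show ?case
    using nderiv.boxL[of G X0 a b Y Z e Xz Yz Zz] BoxL.IH(1,2)[OF represents_io] BoxL.IH(3)[OF rep]
      represents_nested[OF rep] represents_nested[OF BoxL.prems] S X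
      by simp
next
  case (BoxR F x a E I b)
  obtain G X Z J where S: "S = fill G (Seq X {#BoxArr a b#} Z)" and I: "I = labelled x X + J"
    and new: "\<And>y c Xn Yn X' Y'. y \<notin> tree_labels r E I {#(x, BoxArr a b)#} \<Longrightarrow>
      represents r (fill G (Seq X' Y' (add_mset (c, Seq Xn Yn {#}) Z))) (add_mset (x,c,y) E)
        (labelled x X' + (labelled y Xn + J)) (labelled x Y' + labelled y Yn)"
    by (rule represents_focus_output[OF BoxR.prems]) (rule that; assumption)
  obtain y where y: "y \<notin> F" "y \<notin> tree_labels r E I {#(x, BoxArr a b)#}"
    using ex_fresh_tree_label[OF BoxR.hyps(1)] by blast
  have rep: "represents r (fill G (Seq X {#} (add_mset (a, Seq {#} {#b#} {#}) Z))) (add_mset (x,a,y) E)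
      I {#(y,b)#}"
    using new[OF y(2), where c=a and Xn="{#}" and Yn="{#b#}" and X'=X and Y'="{#}"] I by simp
  then have "nderiv (fill G (Seq X {#} (add_mset (a, Seq {#} {#b#} {#}) Z)))"
    using BoxR.IH y(1) by blast
  then show ?case
    using nderiv.boxR[of G X "{#}" a b Z]
      represents_nested[OF rep] represents_nested[OF BoxR.prems] S by simp
next
  case (DiaL F x a E b K u)
  obtain G X Y Z J P where S: "S = fill G (Seq (add_mset (DiaArr a b) X) Y Z)"
    and K: "K = labelled x X + J" and O: "{#u#} = labelled x Y + P"
    and new: "\<And>y c Xn Yn X' Y'. y \<notin> tree_labels r E (add_mset (x, DiaArr a b) K) {#u#} \<Longrightarrow>
      represents r (fill G (Seq X' Y' (add_mset (c, Seq Xn Yn {#}) Z))) (add_mset (x,c,y) E)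
        (labelled x X' + (labelled y Xn + J))
        (labelled x Y' + (labelled y Yn + P))"
    by (rule represents_focus_input[OF DiaL.prems]) (rule that; assumption)
  obtain y where y: "y \<notin> F" "y \<notin> tree_labels r E (add_mset (x, DiaArr a b) K) {#u#}"
    using ex_fresh_tree_label[OF DiaL.hyps(1)] by blast
  have rep: "represents r (fill G (Seq X Y (add_mset (a, Seq {#b#} {#} {#}) Z))) (add_mset (x,a,y) E)
      (add_mset (y,b) K) {#u#}"
    using new[OF y(2), where c=a and Xn="{#b#}" and Yn="{#}" and X'=X and Y'=Y] K O
    by (simp add: ac_simps)
  then have "nderiv (fill G (Seq X Y (add_mset (a, Seq {#b#} {#} {#}) Z)))"
    using DiaL.IH y(1) by blast
  then show ?case
    using nderiv.diaL[of G X a b Y Z]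
      represents_nested[OF rep] represents_nested[OF DiaL.prems] S by simp
next
  case (DiaR x e z E a I b)
  obtain G X Y Z Xz Yz Zz J P where S: "S = fill G (Seq X Y (add_mset (e, Seq Xz Yz Zz) Z))"
    and I: "I = labelled x X + (labelled z Xz + J)"
    and O: "{#(x, DiaArr a b)#} = labelled x Y + (labelled z Yz + P)"
      "x \<notin> flabels (labelled z Yz + P)"
    and upd: "\<And>X' Y' Xz' Yz'. represents r (fill G (Seq X' Y' (add_mset (e, Seq Xz' Yz' Zz) Z))) E
        (labelled x X' + (labelled z Xz' + J))
        (labelled x Y' + (labelled z Yz' + P))"
    by (rule represents_focus_edge[OF DiaR.prems DiaR.hyps(1)]) (rule that; assumption)
  have Y: "Y = {#DiaArr a b#}" "Yz = {#}" "P = {#}" using output_at_label[OF O] by auto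
  have rep: "represents r (fill G (Seq X {#} (add_mset (e, Seq Xz {#b#} Zz) Z))) E I {#(z,b)#}"
    using upd[of X "{#}" Xz "{#b#}"] I Y by simp
  show ?case
    using nderiv.diaR[of G X "{#}" a b Z e Xz "{#}" Zz] DiaR.IH(1,2)[OF represents_io] DiaR.IH(3)[OF rep]
      represents_nested[OF rep] represents_nested[OF DiaR.prems]
      S Y by simp
qed

theorem theorem3:
  fixes A :: "'a fm set" and \<phi> :: "'a fm"
  assumes "finite (insert \<phi> A)"
    and "derives A \<phi>"
  shows "nderiv (Seq (mset_set A) {#\<phi>#} {#})"
proof -
  have "lderiv {#} (labelled 0 (mset_set A)) (0, \<phi>)"
    using assms by (simp add: lderiv_if_derives)
  moreover have "represents 0 (Seq (mset_set A) {#\<phi>#} {#}) {#} (labelled 0 (mset_set A)) {#(0,\<phi>)#}"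
    using represents.leaf[of 0 "mset_set A" "{#\<phi>#}"] by simp
  ultimately show ?thesis by (rule nderiv_if_represented)
qed

end
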